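(* Let $H$ be a $\Lambda$-module and $k\ge1$. (i) For every $z\in S^1$ and every character $\chi\colon H\to S^1$ factoring through $H/(t^k-1)H$, the map $\alpha_{(z,\chi)}\colon\mathbb{Z}\ltimes H\to U(k)$ is a group homomorphism. (ii) If $\chi$ does not factor through $H/(t^l-1)H$ for any $1\le l<k$, then $\alpha_{(z,\chi)}$ is irreducible. (iii) Conversely, every irreducible unitary representation $\mathbb{Z}\ltimes H\to U(k)$ is conjugate (by a unitary matrix) to $\alpha_{(z,\chi)}$ for some $z\in S^1$ and some character $\chi\colon H\to H/(t^k-1)H\to S^1$.
   Context: $\Lambda=\mathbb{Z}[t,t^{-1}]$. For a $\Lambda$-module $H$, $\mathbb{Z}\ltimes H$ denotes the group with underlying set $\mathbb{Z}\times H$ and multiplication $(n,h)(m,h')=(n+m,\,t^mh+h')$. For $z\in S^1$ and a character $\chi\colon H\to S^1$ factoring through $H/(t^k-1)H$, define $\alpha_{(z,\chi)}(n,h)=z^n A^n\,\mathrm{diag}(\chi(h),\chi(th),\dots,\chi(t^{k-1}h))$, where $A$ is the $k\times k$ cyclic permutation matrix with $Ae_i=e_{i+1}$ for $i<k$ and $Ae_k=e_1$ (i.e. ones on the subdiagonal and in the top-right corner). *)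

theory Defs
  imports Complex_Main "Jordan_Normal_Form.Matrix"
begin

text \<open>A module over Lambda = Z[t,t^-1] is an abelian group H together with an
  additive automorphism T (the action of t).\<close>

definition lambda_module :: "('h::ab_group_add \<Rightarrow> 'h) \<Rightarrow> bool" where
  "lambda_module T \<longleftrightarrow> bij T \<and> (\<forall>a b. T (a + b) = T a + T b)"

definition tpow :: "('h \<Rightarrow> 'h) \<Rightarrow> int \<Rightarrow> 'h \<Rightarrow> 'h" where
  "tpow T m = (if 0 \<le> m then T ^^ nat m else (inv_into UNIV T) ^^ nat (- m))"

definition sd_mult :: "('h::ab_group_add \<Rightarrow> 'h) \<Rightarrow> int \<times> 'h \<Rightarrow> int \<times> 'h \<Rightarrow> int \<times> 'h" where
  "sd_mult T g g' = (fst g + fst g', tpow T (fst g') (snd g) + snd g')"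

definition character :: "('h::ab_group_add \<Rightarrow> complex) \<Rightarrow> bool" where
  "character \<chi> \<longleftrightarrow> (\<forall>a. cmod (\<chi> a) = 1) \<and> (\<forall>a b. \<chi> (a + b) = \<chi> a * \<chi> b)"

text \<open>chi factors through H/(t^l - 1)H, i.e. chi vanishes (is 1) on (t^l - 1)H.\<close>
definition factors_through :: "('h::ab_group_add \<Rightarrow> 'h) \<Rightarrow> nat \<Rightarrow> ('h \<Rightarrow> complex) \<Rightarrow> bool" where
  "factors_through T l \<chi> \<longleftrightarrow> (\<forall>h. \<chi> ((T ^^ l) h - h) = 1)"

definition ctrans :: "complex mat \<Rightarrow> complex mat" where
  "ctrans A = mat (dim_col A) (dim_row A) (\<lambda>(i, j). cnj (A $$ (j, i)))"

definition unitary_mat :: "nat \<Rightarrow> complex mat \<Rightarrow> bool" where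
  "unitary_mat k U \<longleftrightarrow> U \<in> carrier_mat k k \<and> U * ctrans U = 1\<^sub>m k \<and> ctrans U * U = 1\<^sub>m k"

definition mat_inv :: "nat \<Rightarrow> complex mat \<Rightarrow> complex mat" where
  "mat_inv k A = (THE B. B \<in> carrier_mat k k \<and> A * B = 1\<^sub>m k \<and> B * A = 1\<^sub>m k)"

definition mat_ipow :: "nat \<Rightarrow> complex mat \<Rightarrow> int \<Rightarrow> complex mat" where
  "mat_ipow k A n = (if 0 \<le> n then A ^\<^sub>m nat n else (mat_inv k A) ^\<^sub>m nat (- n))"

definition unitary_rep :: "('h::ab_group_add \<Rightarrow> 'h) \<Rightarrow> nat \<Rightarrow> (int \<times> 'h \<Rightarrow> complex mat) \<Rightarrow> bool" where
  "unitary_rep T k \<rho> \<longleftrightarrow> (\<forall>g. unitary_mat k (\<rho> g)) \<and>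
     (\<forall>g g'. \<rho> (sd_mult T g g') = \<rho> g * \<rho> g')"

definition invariant_subspace :: "nat \<Rightarrow> (int \<times> 'h \<Rightarrow> complex mat) \<Rightarrow> complex vec set \<Rightarrow> bool" where
  "invariant_subspace k \<rho> W \<longleftrightarrow> W \<subseteq> carrier_vec k \<and> 0\<^sub>v k \<in> W \<and>
     (\<forall>v\<in>W. \<forall>w\<in>W. v + w \<in> W) \<and> (\<forall>c. \<forall>v\<in>W. c \<cdot>\<^sub>v v \<in> W) \<and>
     (\<forall>g. \<forall>v\<in>W. \<rho> g *\<^sub>v v \<in> W)"

definition irreducible_rep :: "nat \<Rightarrow> (int \<times> 'h \<Rightarrow> complex mat) \<Rightarrow> bool" where
  "irreducible_rep k \<rho> \<longleftrightarrow> (\<forall>W. invariant_subspace k \<rho> W \<longrightarrow> W = {0\<^sub>v k} \<or> W = carrier_vec k)"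

text \<open>Cyclic permutation matrix: A e_i = e_(i+1), A e_k = e_1 (0-indexed here).\<close>
definition cyc_mat :: "nat \<Rightarrow> complex mat" where
  "cyc_mat k = mat k k (\<lambda>(i, j). if i = Suc j mod k then 1 else 0)"

definition alpha :: "('h::ab_group_add \<Rightarrow> 'h) \<Rightarrow> nat \<Rightarrow> complex \<Rightarrow> ('h \<Rightarrow> complex) \<Rightarrow> int \<times> 'h \<Rightarrow> complex mat" where
  "alpha T k z \<chi> g = (z powi (fst g)) \<cdot>\<^sub>m (mat_ipow k (cyc_mat k) (fst g) *
      mat k k (\<lambda>(i, j). if i = j then \<chi> ((T ^^ i) (snd g)) else 0))"

end

(* Every alpha_(z,chi)(n,h) is a monomial matrix, sending e_j to z^n chi(t^j h) e_(j+n mod k).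
   Products of such matrices are again monomial, and since chi is periodic under t^k the
   diagonal factors obey the multiplication rule of Z \<ltimes> H; this gives (i).

   For (ii), exact period k makes the characters chi o t^j (j < k) pairwise distinct, so in a
   nonzero invariant subspace a nonzero vector of minimal support is a multiple of a unit vector,
   and the cyclic shift alpha(1,0) then produces all unit vectors.

   For (iii), the commuting unitary matrices rho(0,h) have a common unit eigenvector v, whose
   eigenvalues form a character chi. The vector rho(1,0)^j v is an eigenvector for chi o t^j, and
   eigenvectors of a unitary matrix for distinct eigenvalues are orthogonal, so chi has a least
   period l. An eigenvector of rho(1,0)^l in the chi-eigenspace, with its orbit rescaled by an l-th
   root z of the eigenvalue, yields an isometry W from C^l to C^k with rho(g) W = W alpha_(z,chi)(g).
   Irreducibility makes W onto, hence l = k and W is the required unitary matrix. *)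

theory Submission
  imports Defs "Jordan_Normal_Form.DL_Rank" "Jordan_Normal_Form.Char_Poly"
begin

section \<open>Subspaces and eigenvectors\<close>

lemma mat_mult_unit_vec:
  "(A :: 'a :: semiring_1 mat) \<in> carrier_mat n m \<Longrightarrow> j < m \<Longrightarrow> A *\<^sub>v unit_vec m j = col A j"
  unfolding carrier_mat_def by (intro eq_vecI) auto

definition lin_subspace :: "nat \<Rightarrow> 'a::field vec set \<Rightarrow> bool" where
  "lin_subspace n W \<longleftrightarrow> W \<subseteq> carrier_vec n \<and> 0\<^sub>v n \<in> W \<and> (\<forall>v\<in>W. \<forall>w\<in>W. v + w \<in> W) \<and>
     (\<forall>c. \<forall>v\<in>W. c \<cdot>\<^sub>v v \<in> W)"

lemma invariant_subspace_iff:
  "invariant_subspace k \<rho> W \<longleftrightarrow> lin_subspace k W \<and> (\<forall>g. \<forall>v\<in>W. \<rho> g *\<^sub>v v \<in> W)"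
  unfolding invariant_subspace_def lin_subspace_def by blast

lemma lin_subspace_carrier: "lin_subspace n (carrier_vec n)"
  unfolding lin_subspace_def by auto

lemma lin_subspace_common_eigenspace:
  assumes W: "lin_subspace n W" and F: "\<And>i. F i \<in> carrier_mat n n"
  shows "lin_subspace n {w \<in> W. \<forall>i. F i *\<^sub>v w = c i \<cdot>\<^sub>v w}"
  unfolding lin_subspace_def
proof (intro conjI ballI allI)
  have WC: "W \<subseteq> carrier_vec n" using W unfolding lin_subspace_def by blast
  have "F i *\<^sub>v 0\<^sub>v n = c i \<cdot>\<^sub>v 0\<^sub>v n" for i using F[of i] by (intro eq_vecI) auto
  then show "0\<^sub>v n \<in> {w \<in> W. \<forall>i. F i *\<^sub>v w = c i \<cdot>\<^sub>v w}"
    using W unfolding lin_subspace_def by blast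
  fix v w assume v: "v \<in> {w \<in> W. \<forall>i. F i *\<^sub>v w = c i \<cdot>\<^sub>v w}"
  have vC: "v \<in> carrier_vec n" using v WC by auto
  { fix u assume u: "u \<in> {w \<in> W. \<forall>i. F i *\<^sub>v w = c i \<cdot>\<^sub>v w}"
    have uC: "u \<in> carrier_vec n" using u WC by auto
    have "v + u \<in> W" using v u W unfolding lin_subspace_def by blast
    moreover have "F i *\<^sub>v (v + u) = c i \<cdot>\<^sub>v (v + u)" for i
      using u v by (simp add: mult_add_distrib_mat_vec[OF F vC uC] smult_add_distrib_vec[OF vC uC])
    ultimately show "v + u \<in> {w \<in> W. \<forall>i. F i *\<^sub>v w = c i \<cdot>\<^sub>v w}" by blast }
  fix a
  have "a \<cdot>\<^sub>v v \<in> W" using v W unfolding lin_subspace_def by blast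
  moreover have "F i *\<^sub>v (a \<cdot>\<^sub>v v) = c i \<cdot>\<^sub>v (a \<cdot>\<^sub>v v)" for i
    using v by (simp add: mult_mat_vec[OF F vC] smult_smult_assoc mult.commute)
  ultimately show "a \<cdot>\<^sub>v v \<in> {w \<in> W. \<forall>i. F i *\<^sub>v w = c i \<cdot>\<^sub>v w}" by blast
qed (use W in \<open>auto simp: lin_subspace_def\<close>)

context vec_space
begin

lemma lin_subspace_submodule: "lin_subspace n (W :: 'a vec set) \<Longrightarrow> submodule class_ring W V"
  unfolding lin_subspace_def by (intro submodule.intro, unfold_locales, auto)

lemma lin_subspace_eq_carrier:
  fixes W :: "'a vec set"
  assumes W: "lin_subspace n W" and units: "\<And>i. i < n \<Longrightarrow> unit_vec n i \<in> W"
  shows "W = carrier_vec n"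
proof
  show "W \<subseteq> carrier_vec n" using W unfolding lin_subspace_def by blast
  have "set (unit_vecs n) \<subseteq> W" using units unfolding unit_vecs_def by auto
  then have "span (set (unit_vecs n)) \<subseteq> W" by (rule span_is_subset[OF _ lin_subspace_submodule[OF W]])
  then show "carrier_vec n \<subseteq> W" by (simp only: span_unit_vecs_is_carrier)
qed

definition subspace_dim :: "'a vec set \<Rightarrow> nat" where
  "subspace_dim W = Max {card A | A. A \<subseteq> W \<and> lin_indpt A}"

lemma finite_indep_cards:
  fixes W :: "'a vec set"
  assumes W: "lin_subspace n W"
  shows "finite {card A | A. A \<subseteq> W \<and> lin_indpt A}"
proof -
  have WC: "W \<subseteq> carrier_vec n" using W unfolding lin_subspace_def by blast
  have "{card A | A. A \<subseteq> W \<and> lin_indpt A} \<subseteq> {..n}"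
    using li_le_dim[OF fin_dim] dim_is_n WC by fastforce
  then show ?thesis by (rule finite_subset) simp
qed

lemma subspace_dim_ge:
  fixes W :: "'a vec set"
  assumes "lin_subspace n W" "A \<subseteq> W" "lin_indpt A"
  shows "card A \<le> subspace_dim W"
  unfolding subspace_dim_def using finite_indep_cards[OF assms(1)] assms(2,3) by (intro Max_ge) blast+

lemma subspace_dim_basis:
  fixes W :: "'a vec set"
  assumes W: "lin_subspace n W"
  obtains A where "A \<subseteq> W" "lin_indpt A" "finite A" "card A = subspace_dim W" "span A = W"
proof -
  have WC: "W \<subseteq> carrier_vec n" using W unfolding lin_subspace_def by blast
  have "lin_indpt {}" by (simp add: lin_dep_def)
  then have "subspace_dim W \<in> {card A | A. A \<subseteq> W \<and> lin_indpt A}"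
    unfolding subspace_dim_def by (intro Max_in[OF finite_indep_cards[OF W]]) auto
  then obtain A where A: "A \<subseteq> W" "lin_indpt A" "card A = subspace_dim W" by auto
  have AC: "A \<subseteq> carrier_vec n" using A(1) WC by blast
  have fin: "finite A" using li_le_dim(1)[OF fin_dim AC A(2)] .
  have "W \<subseteq> span A"
  proof
    fix w assume w: "w \<in> W"
    show "w \<in> span A"
    proof (rule ccontr)
      assume nw: "w \<notin> span A"
      then have wA: "w \<notin> A" using in_own_span[OF AC] by blast
      have "w \<in> carrier_vec n" using w WC by blast
      then have "lin_indpt (A \<union> {w})" using lin_dep_iff_in_span[OF AC A(2) _ wA] nw by simp
      moreover have "A \<union> {w} \<subseteq> W" using A(1) w by blast
      ultimately have "card (A \<union> {w}) \<le> subspace_dim W" by (intro subspace_dim_ge[OF W])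
      then show False using A(3) fin wA by simp
    qed
  qed
  then have "span A = W" using span_is_subset[OF A(1) lin_subspace_submodule[OF W]] by blast
  then show ?thesis using that[OF A(1,2) fin A(3)] by simp
qed

lemma subspace_dim_less:
  fixes W :: "'a vec set"
  assumes W: "lin_subspace n W" and W': "lin_subspace n W'" and sub: "W' \<subset> W"
  shows "subspace_dim W' < subspace_dim W"
proof -
  obtain A where A: "A \<subseteq> W'" "lin_indpt A" "finite A" "card A = subspace_dim W'" "span A = W'"
    using subspace_dim_basis[OF W'] .
  obtain w where w: "w \<in> W" "w \<notin> W'" using sub by blast
  have WC: "W \<subseteq> carrier_vec n" using W unfolding lin_subspace_def by blast
  have AC: "A \<subseteq> carrier_vec n" using A(1) sub WC by blast
  have wA: "w \<notin> A" using w A(1) by blast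
  have "w \<in> carrier_vec n" using w WC by blast
  then have "lin_indpt (A \<union> {w})" using lin_dep_iff_in_span[OF AC A(2) _ wA] A(5) w by simp
  moreover have "A \<union> {w} \<subseteq> W" using A(1) w sub by blast
  ultimately have "card (A \<union> {w}) \<le> subspace_dim W" by (intro subspace_dim_ge[OF W])
  then show ?thesis using A(3,4) wA by simp
qed

lemma lin_subspace_as_range:
  fixes W :: "'a vec set"
  assumes W: "lin_subspace n W"
  obtains P d where "P \<in> carrier_mat n d" "W = (\<lambda>x. P *\<^sub>v x) ` carrier_vec d"
    "\<forall>x\<in>carrier_vec d. P *\<^sub>v x = 0\<^sub>v n \<longrightarrow> x = 0\<^sub>v d"
proof -
  obtain A where A: "A \<subseteq> W" "lin_indpt A" "finite A" "card A = subspace_dim W" "span A = W"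
    by (rule subspace_dim_basis[OF W])
  obtain bs where bs: "set bs = A" "distinct bs" using finite_distinct_list[OF A(3)] by blast
  define P where "P = mat_of_cols n bs"
  have bsC: "set bs \<subseteq> carrier_vec n" using A(1) bs(1) W unfolding lin_subspace_def by blast
  have P: "P \<in> carrier_mat n (length bs)" unfolding P_def by simp
  have lc: "lincomb_list c bs = P *\<^sub>v vec (length bs) c" for c
    unfolding P_def using bsC by (intro lincomb_list_as_mat_mult) auto
  have "span_list bs = (\<lambda>x. P *\<^sub>v x) ` carrier_vec (length bs)"
  proof (intro equalityI subsetI)
    fix v assume "v \<in> span_list bs"
    then obtain c where "v = lincomb_list c bs" unfolding span_list_def by blast
    then show "v \<in> (\<lambda>x. P *\<^sub>v x) ` carrier_vec (length bs)" using lc by auto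
  next
    fix v assume "v \<in> (\<lambda>x. P *\<^sub>v x) ` carrier_vec (length bs)"
    then obtain x where x: "x \<in> carrier_vec (length bs)" "v = P *\<^sub>v x" by blast
    moreover have "vec (length bs) (\<lambda>i. x $ i) = x" using x(1) by (intro eq_vecI) auto
    ultimately have "v = lincomb_list (\<lambda>i. x $ i) bs" using lc[of "\<lambda>i. x $ i"] by simp
    then show "v \<in> span_list bs" unfolding span_list_def by auto
  qed
  moreover have "span_list bs = W" using span_list_as_span[OF bsC] A(5) bs(1) by simp
  moreover have "x = 0\<^sub>v (length bs)"
    if x: "x \<in> carrier_vec (length bs)" and Px: "P *\<^sub>v x = 0\<^sub>v n" for x
  proof (rule ccontr)
    assume "x \<noteq> 0\<^sub>v (length bs)"
    from lin_depI[OF P x this Px] have "lin_dep (set (cols P))"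
      unfolding P_def using bsC bs(2) by simp
    then show False unfolding P_def using bsC bs(1) A(2) by simp
  qed
  ultimately show ?thesis using that[OF P] by simp
qed

end

lemma complex_mat_has_eigenvector:
  fixes C :: "complex mat"
  assumes C: "C \<in> carrier_mat d d" and d: "0 < d"
  obtains x \<mu> where "x \<in> carrier_vec d" "x \<noteq> 0\<^sub>v d" "C *\<^sub>v x = \<mu> \<cdot>\<^sub>v x"
proof -
  obtain as where cp: "char_poly C = (\<Prod>a\<leftarrow>as. [:- a, 1:])" and len: "length as = d"
    using char_poly_factorized[OF C] by blast
  then obtain a as' where "as = a # as'" using d by (cases as) auto
  then have "eigenvalue C a" using eigenvalue_root_char_poly[OF C] cp by simp
  then obtain x where "eigenvector C x a" unfolding eigenvalue_def by blast
  then show ?thesis using that C unfolding eigenvector_def by auto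
qed

lemma range_invariant_factor:
  fixes F P :: "'a :: comm_ring_1 mat"
  assumes F: "F \<in> carrier_mat n n" and P: "P \<in> carrier_mat n d"
    and inv: "\<And>x. x \<in> carrier_vec d \<Longrightarrow> \<exists>y\<in>carrier_vec d. F *\<^sub>v (P *\<^sub>v x) = P *\<^sub>v y"
  obtains C where "C \<in> carrier_mat d d" "F * P = P * C"
proof -
  have "\<exists>y\<in>carrier_vec d. F *\<^sub>v col P j = P *\<^sub>v y" if j: "j < d" for j
    using inv[of "unit_vec d j"] mat_mult_unit_vec[OF P j] by simp
  then obtain ys where ys: "\<And>j. j < d \<Longrightarrow> ys j \<in> carrier_vec d \<and> F *\<^sub>v col P j = P *\<^sub>v ys j"
    by metis
  define C where "C = mat d d (\<lambda>(i, j). ys j $ i)"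
  have C: "C \<in> carrier_mat d d" unfolding C_def by simp
  have "F * P = P * C"
  proof (rule mat_col_eqI)
    fix j assume "j < dim_col (P * C)"
    then have j: "j < d" using C by simp
    have "col C j = ys j" unfolding C_def using j ys[OF j] by (intro eq_vecI) auto
    then show "col (F * P) j = col (P * C) j"
      using col_mult2[OF F P j] col_mult2[OF P C j] ys[OF j] by simp
  qed (use F P C in simp_all)
  with C that show ?thesis by blast
qed

lemma eigenvector_in_invariant_subspace:
  fixes F :: "complex mat"
  assumes W: "lin_subspace n W" and ne: "W \<noteq> {0\<^sub>v n}" and F: "F \<in> carrier_mat n n"
    and inv: "\<forall>w\<in>W. F *\<^sub>v w \<in> W"
  obtains w c where "w \<in> W" "w \<noteq> 0\<^sub>v n" "F *\<^sub>v w = c \<cdot>\<^sub>v w"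
proof -
  interpret vec_space "TYPE(complex)" n .
  obtain P d where P: "P \<in> carrier_mat n d" and range: "W = (\<lambda>x. P *\<^sub>v x) ` carrier_vec d"
    and inj: "\<forall>x\<in>carrier_vec d. P *\<^sub>v x = 0\<^sub>v n \<longrightarrow> x = 0\<^sub>v d"
    by (rule lin_subspace_as_range[OF W])
  have "0 < d"
  proof (rule ccontr)
    assume "\<not> 0 < d"
    then have "x = 0\<^sub>v d" if "x \<in> carrier_vec d" for x using that by (intro eq_vecI) auto
    then have "W \<subseteq> {P *\<^sub>v 0\<^sub>v d}" using range by auto
    moreover have "P *\<^sub>v 0\<^sub>v d = 0\<^sub>v n" using P by (intro eq_vecI) auto
    ultimately have "W \<subseteq> {0\<^sub>v n}" by simp
    then show False using ne W unfolding lin_subspace_def by blast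
  qed
  have "\<exists>y\<in>carrier_vec d. F *\<^sub>v (P *\<^sub>v x) = P *\<^sub>v y" if "x \<in> carrier_vec d" for x
    using inv that unfolding range by blast
  then obtain C where C: "C \<in> carrier_mat d d" and FP: "F * P = P * C"
    by (rule range_invariant_factor[OF F P])
  obtain x \<mu> where x: "x \<in> carrier_vec d" "x \<noteq> 0\<^sub>v d" "C *\<^sub>v x = \<mu> \<cdot>\<^sub>v x"
    by (rule complex_mat_has_eigenvector[OF C \<open>0 < d\<close>])
  have "F *\<^sub>v (P *\<^sub>v x) = (P * C) *\<^sub>v x" using F P x(1) FP by (simp flip: assoc_mult_mat_vec)
  also have "\<dots> = \<mu> \<cdot>\<^sub>v (P *\<^sub>v x)" using P C x by (simp add: mult_mat_vec)
  finally show ?thesis using that inj x range by blast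
qed

lemma eigenspace_invariant_if_commute:
  assumes W: "lin_subspace n W" and G: "G \<in> carrier_mat n n" and invG: "\<forall>w\<in>W. G *\<^sub>v w \<in> W"
    and comm: "\<forall>w\<in>W. F *\<^sub>v (G *\<^sub>v w) = G *\<^sub>v (F *\<^sub>v w)"
    and u: "u \<in> W" "F *\<^sub>v u = c \<cdot>\<^sub>v u"
  shows "G *\<^sub>v u \<in> W \<and> F *\<^sub>v (G *\<^sub>v u) = c \<cdot>\<^sub>v (G *\<^sub>v u)"
proof -
  have uC: "u \<in> carrier_vec n" using u(1) W unfolding lin_subspace_def by blast
  have "F *\<^sub>v (G *\<^sub>v u) = G *\<^sub>v (c \<cdot>\<^sub>v u)" using comm u by simp
  also have "\<dots> = c \<cdot>\<^sub>v (G *\<^sub>v u)" by (rule mult_mat_vec[OF G uC])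
  finally show ?thesis using invG u(1) by blast
qed

lemma common_eigenvector:
  fixes Fs :: "complex mat set"
  assumes W: "lin_subspace n W" "W \<noteq> {0\<^sub>v n}" and Fs: "Fs \<subseteq> carrier_mat n n"
    and inv: "\<forall>F\<in>Fs. \<forall>w\<in>W. F *\<^sub>v w \<in> W"
    and comm: "\<forall>F\<in>Fs. \<forall>G\<in>Fs. \<forall>w\<in>W. F *\<^sub>v (G *\<^sub>v w) = G *\<^sub>v (F *\<^sub>v w)"
  obtains w where "w \<in> W" "w \<noteq> 0\<^sub>v n" "\<forall>F\<in>Fs. \<exists>c. F *\<^sub>v w = c \<cdot>\<^sub>v w"
proof -
  interpret vec_space "TYPE(complex)" n .
  \<comment> \<open>A nonzero invariant subspace of least dimension lies in an eigenspace of every member of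
    Fs: the eigenspace inside it is again invariant, since the members of Fs commute.\<close>
  define S where "S = {W'. lin_subspace n W' \<and> W' \<subseteq> W \<and> W' \<noteq> {0\<^sub>v n} \<and> (\<forall>F\<in>Fs. \<forall>w\<in>W'. F *\<^sub>v w \<in> W')}"
  have "W \<in> S" unfolding S_def using W inv by blast
  then obtain W0 where W0: "W0 \<in> S" and min: "\<And>W'. W' \<in> S \<Longrightarrow> subspace_dim W0 \<le> subspace_dim W'"
    using ex_has_least_nat[of "\<lambda>W'. W' \<in> S" W subspace_dim] by auto
  have W0S: "lin_subspace n W0" "W0 \<subseteq> W" "W0 \<noteq> {0\<^sub>v n}" "\<forall>F\<in>Fs. \<forall>w\<in>W0. F *\<^sub>v w \<in> W0"
    using W0 unfolding S_def by auto
  have scalar: "\<exists>c. \<forall>w\<in>W0. F *\<^sub>v w = c \<cdot>\<^sub>v w" if F: "F \<in> Fs" for F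
  proof -
    have Fc: "F \<in> carrier_mat n n" using F Fs by blast
    obtain w c where w: "w \<in> W0" "w \<noteq> 0\<^sub>v n" "F *\<^sub>v w = c \<cdot>\<^sub>v w"
      using eigenvector_in_invariant_subspace[OF W0S(1,3) Fc] W0S(4) F by blast
    define W1 where "W1 = {w \<in> W0. F *\<^sub>v w = c \<cdot>\<^sub>v w}"
    have W1: "lin_subspace n W1"
      using lin_subspace_common_eigenspace[OF W0S(1), of "\<lambda>_::unit. F" "\<lambda>_. c"] Fc
      unfolding W1_def by simp
    have "G *\<^sub>v u \<in> W1" if G: "G \<in> Fs" and u: "u \<in> W1" for G u
      using eigenspace_invariant_if_commute[OF W0S(1), of G F u c] G Fs W0S(2,4) comm F u
      unfolding W1_def by blast
    then have "W1 \<in> S" unfolding S_def using W1 w W0S(2) unfolding W1_def by blast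
    then have "\<not> W1 \<subset> W0" using min subspace_dim_less[OF W0S(1) W1] by fastforce
    then have "W1 = W0" unfolding W1_def by blast
    then show ?thesis unfolding W1_def by blast
  qed
  obtain w where "w \<in> W0" "w \<noteq> 0\<^sub>v n" using W0S(1,3) unfolding lin_subspace_def by blast
  then show ?thesis using that scalar W0S(2) by blast
qed

section \<open>Inner products and orthonormal columns\<close>

lemma ctrans_carrier: "A \<in> carrier_mat n m \<Longrightarrow> ctrans A \<in> carrier_mat m n"
  unfolding ctrans_def by simp

lemma ctrans_ctrans: "ctrans (ctrans A) = A"
  unfolding ctrans_def by (intro eq_matI) auto

lemma cscalar_prod_smult_left: "v \<in> carrier_vec n \<Longrightarrow> w \<in> carrier_vec n \<Longrightarrow> (c \<cdot>\<^sub>v v) \<bullet>c w = c * (v \<bullet>c w)"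
  and cscalar_prod_smult_right: "v \<in> carrier_vec n \<Longrightarrow> w \<in> carrier_vec n \<Longrightarrow> v \<bullet>c (c \<cdot>\<^sub>v w) = cnj c * (v \<bullet>c w)"
  for v w :: "complex vec"
  by (simp_all add: conjugate_smult_vec)

lemma mult_mat_vec_cscalar_prod:
  fixes A :: "complex mat"
  assumes A: "A \<in> carrier_mat n m" and v: "v \<in> carrier_vec m" and w: "w \<in> carrier_vec n"
  shows "(A *\<^sub>v v) \<bullet>c w = v \<bullet>c (ctrans A *\<^sub>v w)"
proof -
  have "(A *\<^sub>v v) \<bullet>c w = (\<Sum>i<n. \<Sum>a<m. A $$ (i, a) * v $ a * cnj (w $ i))"
    using A v w by (simp add: scalar_prod_def atLeast0LessThan sum_distrib_right)
  also have "\<dots> = (\<Sum>a<m. \<Sum>i<n. A $$ (i, a) * v $ a * cnj (w $ i))" by (rule sum.swap)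
  also have "\<dots> = v \<bullet>c (ctrans A *\<^sub>v w)"
    using A v w by (simp add: scalar_prod_def atLeast0LessThan ctrans_def sum_distrib_left ac_simps)
  finally show ?thesis .
qed

lemma unitary_cscalar_prod:
  fixes A :: "complex mat"
  assumes A: "A \<in> carrier_mat n n" "ctrans A * A = 1\<^sub>m n" and v: "v \<in> carrier_vec n" and w: "w \<in> carrier_vec n"
  shows "(A *\<^sub>v v) \<bullet>c (A *\<^sub>v w) = v \<bullet>c w"
  using mult_mat_vec_cscalar_prod[OF A(1) v] A w ctrans_carrier[OF A(1)]
  by (simp flip: assoc_mult_mat_vec)

lemma cmod_eq_1_if_smult_isometric:
  fixes v :: "complex vec"
  assumes v: "v \<in> carrier_vec n" "v \<noteq> 0\<^sub>v n" and eq: "(c \<cdot>\<^sub>v v) \<bullet>c (c \<cdot>\<^sub>v v) = v \<bullet>c v"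
  shows "cmod c = 1"
proof -
  have "(cnj c * c) * (v \<bullet>c v) = v \<bullet>c v"
    using eq v by (simp add: cscalar_prod_smult_left cscalar_prod_smult_right)
  then have "c * cnj c = 1" using v by (simp add: mult.commute)
  then have "(cmod c)\<^sup>2 = 1" using complex_norm_square[of c] by (metis of_real_eq_1_iff)
  then show ?thesis using norm_ge_zero[of c] by (auto simp: power2_eq_1_iff)
qed

lemma unitary_eigenvalue_cmod:
  fixes A :: "complex mat"
  assumes A: "A \<in> carrier_mat n n" "ctrans A * A = 1\<^sub>m n"
    and v: "v \<in> carrier_vec n" "v \<noteq> 0\<^sub>v n" and ev: "A *\<^sub>v v = a \<cdot>\<^sub>v v"
  shows "cmod a = 1"
  using unitary_cscalar_prod[OF A v(1) v(1)] by (intro cmod_eq_1_if_smult_isometric[OF v]) (simp add: ev)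

lemma unitary_eigenvectors_orthogonal:
  fixes A :: "complex mat"
  assumes A: "A \<in> carrier_mat n n" "ctrans A * A = 1\<^sub>m n"
    and v: "v \<in> carrier_vec n" and w: "w \<in> carrier_vec n" "w \<noteq> 0\<^sub>v n"
    and ev: "A *\<^sub>v v = a \<cdot>\<^sub>v v" and ew: "A *\<^sub>v w = b \<cdot>\<^sub>v w" and ab: "a \<noteq> b"
  shows "v \<bullet>c w = 0"
proof -
  have "b * cnj b = 1"
    using unitary_eigenvalue_cmod[OF A w ew] complex_norm_square[of b] by simp
  then have "a * cnj b \<noteq> 1" using ab by (metis mult.assoc mult.right_neutral mult.commute)
  moreover have "v \<bullet>c w = 0 \<or> cnj b * a = 1"
    using unitary_cscalar_prod[OF A v w(1)] v w
    by (simp add: ev ew cscalar_prod_smult_left cscalar_prod_smult_right)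
  ultimately show ?thesis by (auto simp: mult.commute)
qed

lemma exists_unit_multiple:
  fixes v :: "complex vec"
  assumes v: "v \<in> carrier_vec n" "v \<noteq> 0\<^sub>v n"
  obtains c where "c \<noteq> 0" "(c \<cdot>\<^sub>v v) \<bullet>c (c \<cdot>\<^sub>v v) = 1"
proof -
  have "v \<bullet>c v > 0" using v by simp
  then obtain r where r: "v \<bullet>c v = complex_of_real r" "r > 0"
    by (metis complex_is_Real_iff less_complex_def zero_complex.sel(1,2) of_real_Re)
  define c where "c = complex_of_real (1 / sqrt r)"
  have "(c \<cdot>\<^sub>v v) \<bullet>c (c \<cdot>\<^sub>v v) = c * cnj c * (v \<bullet>c v)"
    using v by (simp add: cscalar_prod_smult_left cscalar_prod_smult_right)
  also have "\<dots> = complex_of_real (1 / sqrt r * (1 / sqrt r) * r)"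
    unfolding c_def r(1) by (simp only: complex_cnj_complex_of_real of_real_mult)
  also have "1 / sqrt r * (1 / sqrt r) * r = 1" using r by (simp add: field_simps)
  finally have "(c \<cdot>\<^sub>v v) \<bullet>c (c \<cdot>\<^sub>v v) = 1" by simp
  moreover have "c \<noteq> 0" using r unfolding c_def by simp
  ultimately show ?thesis using that by blast
qed

definition mat_of_col_fun :: "nat \<Rightarrow> nat \<Rightarrow> (nat \<Rightarrow> 'a vec) \<Rightarrow> 'a mat" where
  "mat_of_col_fun k m w = mat k m (\<lambda>(i, j). w j $ i)"

lemma mat_of_col_fun_carrier [simp]: "mat_of_col_fun k m w \<in> carrier_mat k m"
  unfolding mat_of_col_fun_def by simp

lemma col_mat_of_col_fun: "j < m \<Longrightarrow> w j \<in> carrier_vec k \<Longrightarrow> col (mat_of_col_fun k m w) j = w j"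
  unfolding mat_of_col_fun_def by (intro eq_vecI) auto

lemma ctrans_mult_mat_of_col_fun_orthonormal:
  assumes "\<And>j. j < m \<Longrightarrow> w j \<in> carrier_vec k"
    and "\<And>i j. i < m \<Longrightarrow> j < m \<Longrightarrow> w j \<bullet>c w i = (if i = j then 1 else 0)"
  shows "ctrans (mat_of_col_fun k m w) * mat_of_col_fun k m w = 1\<^sub>m m"
proof (rule eq_matI)
  fix i j assume "i < dim_row (1\<^sub>m m)" "j < dim_col (1\<^sub>m m)"
  then have i: "i < m" and j: "j < m" by simp_all
  then have "w i \<in> carrier_vec k" "w j \<in> carrier_vec k" using assms(1) by blast+
  then have "(ctrans (mat_of_col_fun k m w) * mat_of_col_fun k m w) $$ (i, j) = w j \<bullet>c w i"
    using i j by (simp add: ctrans_def mat_of_col_fun_def scalar_prod_def ac_simps)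
  then show "(ctrans (mat_of_col_fun k m w) * mat_of_col_fun k m w) $$ (i, j) = 1\<^sub>m m $$ (i, j)"
    using assms(2)[OF i j] i j by simp
qed (simp_all add: ctrans_def mat_of_col_fun_def)

lemma mat_eq_one_if_fixes_vectors:
  assumes A: "(A :: 'a :: semiring_1 mat) \<in> carrier_mat n n" and ident: "\<And>v. v \<in> carrier_vec n \<Longrightarrow> A *\<^sub>v v = v"
  shows "A = 1\<^sub>m n"
  by (rule mat_col_eqI) (use A ident mat_mult_unit_vec[OF A] in \<open>auto simp flip: mat_mult_unit_vec\<close>)

lemma orthonormal_cols_inj:
  fixes M :: "complex mat"
  assumes M: "M \<in> carrier_mat k m" and orth: "ctrans M * M = 1\<^sub>m m"
    and x: "x \<in> carrier_vec m" and y: "y \<in> carrier_vec m" and eq: "M *\<^sub>v x = M *\<^sub>v y"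
  shows "x = y"
proof -
  have "v = ctrans M *\<^sub>v (M *\<^sub>v v)" if "v \<in> carrier_vec m" for v
    using that M ctrans_carrier[OF M] by (simp add: orth flip: assoc_mult_mat_vec)
  then show ?thesis using x y eq by metis
qed

lemma orthonormal_cols_le:
  fixes M :: "complex mat"
  assumes M: "M \<in> carrier_mat k m" and orth: "ctrans M * M = 1\<^sub>m m"
  shows "m \<le> k"
proof -
  interpret vec_space "TYPE(complex)" k .
  note inj = orthonormal_cols_inj[OF M orth]
  have "inj_on (col M) {..<m}"
  proof (rule inj_onI)
    fix i j assume ij: "i \<in> {..<m}" "j \<in> {..<m}" "col M i = col M j"
    then have "M *\<^sub>v unit_vec m i = M *\<^sub>v unit_vec m j" using mat_mult_unit_vec[OF M] by simp
    then have "unit_vec m i = (unit_vec m j :: complex vec)" by (rule inj[rotated 2]) auto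
    then show "i = j" using ij by simp
  qed
  then have dist: "distinct (cols M)" using M unfolding cols_def by (simp add: distinct_map atLeast0LessThan)
  have "lin_indpt (set (cols M))"
  proof
    assume "lin_dep (set (cols M))"
    then obtain v where "v \<in> carrier_vec m" "v \<noteq> 0\<^sub>v m" "M *\<^sub>v v = 0\<^sub>v k" by (rule lin_depE[OF M _ dist])
    moreover have "M *\<^sub>v 0\<^sub>v m = 0\<^sub>v k" using M by (intro eq_vecI) auto
    ultimately show False using inj[of _ "0\<^sub>v m"] by auto
  qed
  moreover have "set (cols M) \<subseteq> carrier_vec k" using M cols_dim by blast
  ultimately have "card (set (cols M)) \<le> k" using li_le_dim(2)[OF fin_dim] dim_is_n by simp
  then show ?thesis using distinct_card[OF dist] M by simp
qed

section \<open>Monomial matrices\<close>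

definition cshift :: "nat \<Rightarrow> int \<Rightarrow> nat \<Rightarrow> nat" where
  "cshift k n j = nat ((int j + n) mod int k)"

lemma cshift_less: "0 < k \<Longrightarrow> cshift k n j < k"
  unfolding cshift_def by (simp add: nat_less_iff)

lemma cshift_cshift: "0 < k \<Longrightarrow> cshift k m (cshift k n j) = cshift k (n + m) j"
  unfolding cshift_def by (simp add: mod_add_left_eq add.assoc)

lemma cshift_0: "cshift k 0 j = j mod k"
  unfolding cshift_def by (simp add: nat_mod_as_int)

lemma cshift_1: "cshift k 1 j = Suc j mod k"
  unfolding cshift_def by (simp add: nat_mod_as_int add.commute)

lemma cshift_eq_iff:
  assumes "0 < k" "i < k" "j < k"
  shows "i = cshift k n j \<longleftrightarrow> j = cshift k (- n) i"
  using cshift_cshift[of k] cshift_0[of k] assms by auto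

definition monomial_mat :: "nat \<Rightarrow> int \<Rightarrow> (nat \<Rightarrow> complex) \<Rightarrow> complex mat" where
  "monomial_mat k n f = mat k k (\<lambda>(i, j). if i = cshift k n j then f j else 0)"

lemma monomial_mat_carrier [simp]: "monomial_mat k n f \<in> carrier_mat k k"
  and dim_monomial_mat [simp]: "dim_row (monomial_mat k n f) = k" "dim_col (monomial_mat k n f) = k"
  unfolding monomial_mat_def by simp_all

lemma index_monomial_mat:
  "i < k \<Longrightarrow> j < k \<Longrightarrow> monomial_mat k n f $$ (i, j) = (if i = cshift k n j then f j else 0)"
  unfolding monomial_mat_def by simp

lemma monomial_mat_cong: "(\<And>j. j < k \<Longrightarrow> f j = g j) \<Longrightarrow> monomial_mat k n f = monomial_mat k n g"
  unfolding monomial_mat_def by (intro eq_matI) auto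

lemma col_monomial_mat:
  assumes "0 < k" "j < k"
  shows "col (monomial_mat k n f) j = f j \<cdot>\<^sub>v unit_vec k (cshift k n j)"
  using assms cshift_less[OF assms(1)] by (intro eq_vecI) (auto simp: index_monomial_mat)

lemma monomial_mat_mult_unit_vec:
  "0 < k \<Longrightarrow> j < k \<Longrightarrow> monomial_mat k n f *\<^sub>v unit_vec k j = f j \<cdot>\<^sub>v unit_vec k (cshift k n j)"
  by (simp add: mat_mult_unit_vec[of _ k k] col_monomial_mat)

lemma monomial_mat_mult:
  assumes k: "0 < k"
  shows "monomial_mat k n f * monomial_mat k m g = monomial_mat k (m + n) (\<lambda>j. f (cshift k m j) * g j)"
proof (rule mat_col_eqI)
  fix j assume "j < dim_col (monomial_mat k (m + n) (\<lambda>j. f (cshift k m j) * g j))"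
  then have j: "j < k" by simp
  show "col (monomial_mat k n f * monomial_mat k m g) j =
        col (monomial_mat k (m + n) (\<lambda>j. f (cshift k m j) * g j)) j"
    using j cshift_less[OF k]
    by (simp add: col_mult2[of _ k k _ k] col_monomial_mat[OF k] mult_mat_vec[of _ k k]
        monomial_mat_mult_unit_vec[OF k] smult_smult_assoc cshift_cshift[OF k] mult.commute)
qed auto

lemma monomial_mat_smult: "c \<cdot>\<^sub>m monomial_mat k n f = monomial_mat k n (\<lambda>j. c * f j)"
  unfolding monomial_mat_def by (intro eq_matI) auto

lemma monomial_mat_diag: "mat k k (\<lambda>(i, j). if i = j then f i else 0) = monomial_mat k 0 f"
  unfolding monomial_mat_def by (intro eq_matI) (auto simp: cshift_0)

lemma monomial_mat_one: "monomial_mat k 0 (\<lambda>_. 1) = 1\<^sub>m k"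
  unfolding monomial_mat_def by (intro eq_matI) (auto simp: cshift_0)

lemma monomial_mat_mult_vec_diag:
  assumes v: "v \<in> carrier_vec k"
  shows "monomial_mat k 0 f *\<^sub>v v = vec k (\<lambda>i. f i * v $ i)"
proof (rule eq_vecI)
  fix i assume "i < dim_vec (vec k (\<lambda>i. f i * v $ i))"
  then have i: "i < k" by simp
  have "(monomial_mat k 0 f *\<^sub>v v) $ i = (\<Sum>j = 0..<k. (if i = j then f j else 0) * v $ j)"
    using i v by (simp add: scalar_prod_def index_monomial_mat cshift_0)
  also have "\<dots> = (\<Sum>j = 0..<k. if j = i then f i * v $ i else 0)" by (rule sum.cong) auto
  finally show "(monomial_mat k 0 f *\<^sub>v v) $ i = vec k (\<lambda>i. f i * v $ i) $ i" using i by simp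
qed (use v in simp)

lemma ctrans_monomial_mat:
  assumes k: "0 < k"
  shows "ctrans (monomial_mat k n f) = monomial_mat k (- n) (\<lambda>j. cnj (f (cshift k (- n) j)))"
proof (rule eq_matI)
  fix i j assume "i < dim_row (monomial_mat k (- n) (\<lambda>j. cnj (f (cshift k (- n) j))))"
    and "j < dim_col (monomial_mat k (- n) (\<lambda>j. cnj (f (cshift k (- n) j))))"
  then have i: "i < k" and j: "j < k" by simp_all
  show "ctrans (monomial_mat k n f) $$ (i, j) = monomial_mat k (- n) (\<lambda>j. cnj (f (cshift k (- n) j))) $$ (i, j)"
    using i j cshift_eq_iff[OF k j i, of n] by (auto simp: ctrans_def index_monomial_mat)
qed (simp_all add: ctrans_def)

lemma unitary_monomial_mat:
  assumes k: "0 < k" and f: "\<And>j. cmod (f j) = 1"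
  shows "unitary_mat k (monomial_mat k n f)"
proof -
  have unit: "f j * cnj (f j) = 1" "cnj (f j) * f j = 1" for j
    using complex_norm_square[of "f j"] f[of j] by (simp_all add: mult.commute)
  have "monomial_mat k n f * ctrans (monomial_mat k n f) = monomial_mat k 0 (\<lambda>_. 1)"
    unfolding ctrans_monomial_mat[OF k] monomial_mat_mult[OF k] add.left_inverse by (simp add: unit)
  moreover have "ctrans (monomial_mat k n f) * monomial_mat k n f = monomial_mat k 0 (\<lambda>_. 1)"
    unfolding ctrans_monomial_mat[OF k] monomial_mat_mult[OF k] add.right_inverse
    by (simp add: cshift_cshift[OF k] cshift_0 unit cong: monomial_mat_cong)
  ultimately show ?thesis unfolding unitary_mat_def monomial_mat_one by simp
qed

lemma cyc_mat_eq: "cyc_mat k = monomial_mat k 1 (\<lambda>_. 1)"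
  unfolding cyc_mat_def monomial_mat_def cshift_1 by (intro eq_matI) auto

lemma monomial_mat_pow:
  assumes k: "0 < k"
  shows "monomial_mat k a (\<lambda>_. 1) ^\<^sub>m m = monomial_mat k (a * int m) (\<lambda>_. 1)"
proof (induction m)
  case (Suc m)
  then show ?case by (simp add: monomial_mat_mult[OF k] distrib_left add.commute)
qed (simp add: monomial_mat_one)

lemma mat_inv_monomial_mat:
  assumes k: "0 < k"
  shows "mat_inv k (monomial_mat k a (\<lambda>_. 1)) = monomial_mat k (- a) (\<lambda>_. 1)"
  unfolding mat_inv_def
proof (rule the_equality)
  let ?M = "monomial_mat k a (\<lambda>_. 1)" and ?N = "monomial_mat k (- a) (\<lambda>_. 1)"
  have inv: "?M * ?N = 1\<^sub>m k" "?N * ?M = 1\<^sub>m k"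
    by (simp_all add: monomial_mat_mult[OF k] monomial_mat_one)
  then show "?N \<in> carrier_mat k k \<and> ?M * ?N = 1\<^sub>m k \<and> ?N * ?M = 1\<^sub>m k" by simp
  fix B assume B: "B \<in> carrier_mat k k \<and> ?M * B = 1\<^sub>m k \<and> B * ?M = 1\<^sub>m k"
  then have Bc: "B \<in> carrier_mat k k" and MB: "?M * B = 1\<^sub>m k" by simp_all
  have "B = (?N * ?M) * B" using Bc by (simp add: inv)
  also have "\<dots> = ?N" using Bc MB by (simp add: assoc_mult_mat[of _ k k _ k _ k])
  finally show "B = ?N" .
qed

lemma mat_ipow_cyc_mat:
  assumes k: "0 < k"
  shows "mat_ipow k (cyc_mat k) n = monomial_mat k n (\<lambda>_. 1)"
  unfolding mat_ipow_def cyc_mat_eq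
  by (simp add: monomial_mat_pow[OF k] mat_inv_monomial_mat[OF k])

lemma alpha_eq_monomial_mat:
  assumes k: "0 < k"
  shows "alpha T k z \<chi> (n, h) = monomial_mat k n (\<lambda>j. z powi n * \<chi> ((T ^^ j) h))"
  unfolding alpha_def mat_ipow_cyc_mat[OF k] monomial_mat_diag
  by (simp only: monomial_mat_mult[OF k] monomial_mat_smult fst_conv snd_conv add_0_right add_0_left
      mult_1_left)

lemma alpha_carrier: "0 < k \<Longrightarrow> alpha T k z \<chi> g \<in> carrier_mat k k"
  by (cases g) (simp add: alpha_eq_monomial_mat)

lemma col_mat_of_col_fun_mult_monomial_mat:
  assumes l: "0 < l" and j: "j < l" and w: "\<And>i. i < l \<Longrightarrow> w i \<in> carrier_vec k"
  shows "col (mat_of_col_fun k l w * monomial_mat l n f) j = f j \<cdot>\<^sub>v w (cshift l n j)"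
proof -
  have c: "cshift l n j < l" by (rule cshift_less[OF l])
  have "col (mat_of_col_fun k l w * monomial_mat l n f) j = mat_of_col_fun k l w *\<^sub>v (f j \<cdot>\<^sub>v unit_vec l (cshift l n j))"
    using j by (simp add: col_mult2[of _ k l _ l] col_monomial_mat[OF l])
  also have "\<dots> = f j \<cdot>\<^sub>v w (cshift l n j)"
    using c w[OF c] by (simp add: mult_mat_vec[of _ k l] mat_mult_unit_vec[of _ k l] col_mat_of_col_fun)
  finally show ?thesis .
qed

section \<open>Characters and the representations alpha\<close>

lemma character_zero: "character \<chi> \<Longrightarrow> \<chi> 0 = 1"
  unfolding character_def by (metis add_0 mult_cancel_left1 norm_zero zero_neq_one)

lemma character_nonzero: "character \<chi> \<Longrightarrow> \<chi> a \<noteq> 0"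
  unfolding character_def by (metis norm_zero zero_neq_one)

lemma character_add: "character \<chi> \<Longrightarrow> \<chi> (a + b) = \<chi> a * \<chi> b"
  and character_norm: "character \<chi> \<Longrightarrow> cmod (\<chi> a) = 1"
  unfolding character_def by blast+

lemma factors_through_iff:
  assumes "character \<chi>"
  shows "factors_through T l \<chi> \<longleftrightarrow> (\<forall>h. \<chi> ((T ^^ l) h) = \<chi> h)"
proof -
  have "\<chi> (a - b) = 1 \<longleftrightarrow> \<chi> a = \<chi> b" for a b
    using character_add[OF assms, of "a - b" b] character_nonzero[OF assms, of b] by auto
  then show ?thesis unfolding factors_through_def by simp
qed

context
  fixes T :: "'h::ab_group_add \<Rightarrow> 'h"
  assumes lm: "lambda_module T"
begin

lemma funpow_additive: "(T ^^ j) (a + b) = (T ^^ j) a + (T ^^ j) b"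
  using lm unfolding lambda_module_def by (induction j) auto

lemma funpow_zero: "(T ^^ j) 0 = 0"
  using funpow_additive[of j 0 0] by simp

lemma surj_funpow: "surj (T ^^ j)"
proof (induction j)
  case (Suc j)
  have "surj T" using lm unfolding lambda_module_def by (simp add: bij_is_surj)
  then show ?case unfolding funpow.simps(2) by (rule comp_surj[OF Suc.IH])
qed simp

lemma tpow_0 [simp]: "tpow T 0 x = x"
  and tpow_1 [simp]: "tpow T 1 x = T x"
  unfolding tpow_def by simp_all

lemma tpow_zero [simp]: "tpow T m 0 = 0"
proof -
  have "inv_into UNIV T 0 = 0"
    using lm funpow_zero[of 1] unfolding lambda_module_def by (simp add: bij_is_inj inv_into_f_eq)
  then have "(inv_into UNIV T ^^ j) 0 = 0" for j by (induction j) auto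
  then show ?thesis unfolding tpow_def by (simp add: funpow_zero)
qed

lemma tpow_add_one: "tpow T (m + 1) x = tpow T m (T x)"
proof (cases "0 \<le> m")
  case True
  then have "nat (m + 1) = Suc (nat m)" by simp
  then show ?thesis unfolding tpow_def using True by (simp add: funpow_Suc_right del: funpow.simps)
next
  case False
  then have "nat (- m) = Suc (nat (- (m + 1)))" by simp
  moreover have "inv_into UNIV T (T x) = x"
    using lm unfolding lambda_module_def by (simp add: bij_is_inj)
  ultimately show ?thesis unfolding tpow_def using False by (simp add: funpow_Suc_right del: funpow.simps)
qed

lemma factors_through_shift:
  assumes "character \<chi>" "i \<le> j" "\<forall>h. \<chi> ((T ^^ i) h) = \<chi> ((T ^^ j) h)"
  shows "factors_through T (j - i) \<chi>"
  unfolding factors_through_iff[OF assms(1)]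
proof
  fix h
  obtain x where x: "(T ^^ i) x = h" using surj_funpow[of i] by (metis surjD)
  have "(T ^^ (j - i)) h = (T ^^ j) x" using x assms(2) funpow_add[of "j - i" i T] by simp
  then show "\<chi> ((T ^^ (j - i)) h) = \<chi> h" using assms(3) x by metis
qed

lemma funpow_character_separate:
  assumes chi: "character \<chi>" and prim: "\<forall>l. 1 \<le> l \<and> l < k \<longrightarrow> \<not> factors_through T l \<chi>"
    and ij: "i < k" "j < k" "i \<noteq> j"
  shows "\<exists>h. \<chi> ((T ^^ i) h) \<noteq> \<chi> ((T ^^ j) h)"
proof -
  have sep: "\<not> (\<forall>h. \<chi> ((T ^^ i) h) = \<chi> ((T ^^ j) h))" if ij: "i < j" "j < k" for i j
  proof
    assume "\<forall>h. \<chi> ((T ^^ i) h) = \<chi> ((T ^^ j) h)"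
    then have "factors_through T (j - i) \<chi>" using factors_through_shift[OF chi] ij by simp
    moreover have "1 \<le> j - i" "j - i < k" using ij by auto
    ultimately show False using prim by blast
  qed
  show ?thesis
  proof (cases "i < j")
    case False
    then obtain h where "\<chi> ((T ^^ j) h) \<noteq> \<chi> ((T ^^ i) h)" using sep[of j i] ij by auto
    then show ?thesis by metis
  qed (use sep ij in auto)
qed

lemma character_funpow_mod:
  assumes chi: "character \<chi>" "factors_through T k \<chi>"
  shows "\<chi> ((T ^^ j) x) = \<chi> ((T ^^ (j mod k)) x)"
proof -
  have period: "\<chi> ((T ^^ (k * q)) y) = \<chi> y" for q y
    using chi by (induction q arbitrary: y) (simp_all add: funpow_add factors_through_iff)
  have "(T ^^ j) x = (T ^^ (k * (j div k))) ((T ^^ (j mod k)) x)"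
    by (metis funpow_add comp_apply div_mult_mod_eq mult.commute)
  then show ?thesis by (simp add: period)
qed

lemma character_tpow:
  assumes chi: "character \<chi>" "factors_through T k \<chi>" and k: "0 < k"
  shows "\<chi> ((T ^^ j) (tpow T m h)) = \<chi> ((T ^^ cshift k m j) h)"
proof (induction m arbitrary: j h rule: int_induct[where k = 0])
  case base
  show ?case using character_funpow_mod[OF chi, of j h] by (simp add: cshift_0)
next
  case (step1 m)
  have "\<chi> ((T ^^ j) (tpow T (m + 1) h)) = \<chi> ((T ^^ cshift k m j) (T h))"
    unfolding tpow_add_one by (rule step1.IH)
  also have "\<dots> = \<chi> ((T ^^ (Suc (cshift k m j) mod k)) h)"
    using character_funpow_mod[OF chi] by (simp add: funpow_Suc_right del: funpow.simps)
  also have "Suc (cshift k m j) mod k = cshift k (m + 1) j"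
    using cshift_cshift[OF k, of 1 m j] by (simp add: cshift_1)
  finally show ?case .
next
  case (step2 m)
  have T_inv: "T (inv_into UNIV T x) = x" for x
    using lm unfolding lambda_module_def by (simp add: bij_is_surj surj_f_inv_f)
  define r where "r = cshift k (m - 1) j"
  have r: "cshift k m j = Suc r mod k"
    using cshift_cshift[OF k, of 1 "m - 1" j] unfolding r_def by (simp add: cshift_1)
  have "tpow T (m - 1) h = tpow T m (inv_into UNIV T h)"
    using tpow_add_one[of "m - 1" "inv_into UNIV T h"] by (simp add: T_inv)
  then have "\<chi> ((T ^^ j) (tpow T (m - 1) h)) = \<chi> ((T ^^ (Suc r mod k)) (inv_into UNIV T h))"
    using step2.IH r by simp
  also have "\<dots> = \<chi> ((T ^^ Suc r) (inv_into UNIV T h))"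
    using character_funpow_mod[OF chi] by simp
  also have "\<dots> = \<chi> ((T ^^ r) h)"
    by (simp add: funpow_Suc_right T_inv del: funpow.simps)
  finally show ?case unfolding r_def .
qed

lemma alpha_mult:
  assumes chi: "character \<chi>" "factors_through T k \<chi>" and k: "0 < k" and z: "cmod z = 1"
  shows "alpha T k z \<chi> (sd_mult T g g') = alpha T k z \<chi> g * alpha T k z \<chi> g'"
proof -
  obtain n h m h' where g: "g = (n, h)" "g' = (m, h')" by (cases g, cases g')
  have "z \<noteq> 0" using z by auto
  then have "z powi (n + m) * \<chi> ((T ^^ j) (tpow T m h + h')) =
      z powi n * \<chi> ((T ^^ cshift k m j) h) * (z powi m * \<chi> ((T ^^ j) h'))" for j
    by (simp add: power_int_add funpow_additive character_add[OF chi(1)] character_tpow[OF chi k] ac_simps)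
  then show ?thesis
    unfolding g sd_mult_def fst_conv snd_conv alpha_eq_monomial_mat[OF k] monomial_mat_mult[OF k]
    by (simp add: add.commute)
qed

lemma unitary_rep_alpha:
  assumes "character \<chi>" "factors_through T k \<chi>" "0 < k" "cmod z = 1"
  shows "unitary_rep T k (alpha T k z \<chi>)"
  unfolding unitary_rep_def
proof (intro conjI allI)
  show "unitary_mat k (alpha T k z \<chi> g)" for g
    using assms unitary_monomial_mat[OF assms(3)]
    by (cases g) (simp add: alpha_eq_monomial_mat norm_mult norm_power_int character_norm)
qed (rule alpha_mult[OF assms])

end

definition vec_support :: "nat \<Rightarrow> 'a::zero vec \<Rightarrow> nat set" where
  "vec_support k v = {i. i < k \<and> v $ i \<noteq> 0}"

lemma diag_invariant_min_support:
  fixes W :: "complex vec set" and d :: "'b \<Rightarrow> nat \<Rightarrow> complex"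
  assumes W: "lin_subspace k W"
    and inv: "\<And>x w. w \<in> W \<Longrightarrow> vec k (\<lambda>i. d x i * w $ i) \<in> W"
    and sep: "\<And>i j. i < k \<Longrightarrow> j < k \<Longrightarrow> i \<noteq> j \<Longrightarrow> \<exists>x. d x i \<noteq> d x j"
    and w: "w \<in> W" "i \<in> vec_support k w"
    and min: "\<And>w'. w' \<in> W \<Longrightarrow> w' \<noteq> 0\<^sub>v k \<Longrightarrow> card (vec_support k w) \<le> card (vec_support k w')"
  shows "vec_support k w = {i}"
proof (rule ccontr)
  assume "vec_support k w \<noteq> {i}"
  then obtain j where j: "j \<in> vec_support k w" "j \<noteq> i" using w(2) by blast
  have wC: "w \<in> carrier_vec k" using w(1) W unfolding lin_subspace_def by blast
  have i: "i < k" "w $ i \<noteq> 0" using w(2) unfolding vec_support_def by simp_all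
  obtain x where x: "d x i \<noteq> d x j" using sep[OF i(1), of j] j unfolding vec_support_def by auto
  \<comment> \<open>This combination of w and its diagonal image cancels coordinate j but not coordinate i.\<close>
  define u where "u = vec k (\<lambda>l. d x l * w $ l) + (- d x j) \<cdot>\<^sub>v w"
  have "u \<in> W" unfolding u_def using W inv[OF w(1)] w(1) unfolding lin_subspace_def by blast
  have u: "u $ l = (d x l - d x j) * w $ l" if "l < k" for l
    unfolding u_def using that wC by (simp add: algebra_simps)
  have "vec_support k u \<subseteq> vec_support k w - {j}"
  proof
    fix l assume "l \<in> vec_support k u"
    then have "l < k" "u $ l \<noteq> 0" by (simp_all add: vec_support_def)
    then show "l \<in> vec_support k w - {j}" using u[of l] by (auto simp: vec_support_def)
  qed
  then have "vec_support k u \<subset> vec_support k w" using j(1) by blast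
  then have "card (vec_support k u) < card (vec_support k w)"
    by (rule psubset_card_mono[rotated]) (simp add: vec_support_def)
  moreover have "u \<noteq> 0\<^sub>v k" using u[OF i(1)] i x by auto
  then have "card (vec_support k w) \<le> card (vec_support k u)" using min \<open>u \<in> W\<close> by blast
  ultimately show False by simp
qed

lemma diag_invariant_subspace_unit_vec:
  fixes W :: "complex vec set" and d :: "'b \<Rightarrow> nat \<Rightarrow> complex"
  assumes W: "lin_subspace k W" "W \<noteq> {0\<^sub>v k}"
    and inv: "\<And>x w. w \<in> W \<Longrightarrow> vec k (\<lambda>i. d x i * w $ i) \<in> W"
    and sep: "\<And>i j. i < k \<Longrightarrow> j < k \<Longrightarrow> i \<noteq> j \<Longrightarrow> \<exists>x. d x i \<noteq> d x j"
  obtains i where "i < k" "unit_vec k i \<in> W"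
proof -
  have WC: "W \<subseteq> carrier_vec k" and W0: "0\<^sub>v k \<in> W" and smult: "\<And>c v. v \<in> W \<Longrightarrow> c \<cdot>\<^sub>v v \<in> W"
    using W(1) unfolding lin_subspace_def by blast+
  obtain w0 where w0: "w0 \<in> W \<and> w0 \<noteq> 0\<^sub>v k" using W(2) W0 by blast
  obtain w where w: "w \<in> W" "w \<noteq> 0\<^sub>v k"
    and min: "\<forall>w'. w' \<in> W \<and> w' \<noteq> 0\<^sub>v k \<longrightarrow> card (vec_support k w) \<le> card (vec_support k w')"
    using ex_has_least_nat[of "\<lambda>w. w \<in> W \<and> w \<noteq> 0\<^sub>v k" w0 "\<lambda>w. card (vec_support k w)", OF w0]
    by blast
  have wC: "w \<in> carrier_vec k" using w WC by blast
  obtain i where i: "i \<in> vec_support k w"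
  proof (rule ccontr)
    assume "\<not> thesis"
    then have "w = 0\<^sub>v k" using that wC by (intro eq_vecI) (auto simp: vec_support_def)
    then show False using w(2) by simp
  qed
  have supp: "vec_support k w = {i}"
    using min by (intro diag_invariant_min_support[OF W(1) inv sep w(1) i]) auto
  define c where "c = w $ i"
  have "i < k" "c \<noteq> 0" using i unfolding c_def vec_support_def by simp_all
  have "w $ j = 0" if "j < k" "j \<noteq> i" for j
    using supp that unfolding vec_support_def by blast
  then have "w = c \<cdot>\<^sub>v unit_vec k i" unfolding c_def using wC \<open>i < k\<close> by (intro eq_vecI) auto
  then have "unit_vec k i = (1 / c) \<cdot>\<^sub>v w" using \<open>c \<noteq> 0\<close> by (simp add: smult_smult_assoc)
  then show ?thesis using smult[OF w(1)] by (intro that[OF \<open>i < k\<close>]) simp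
qed

context
  fixes T :: "'h::ab_group_add \<Rightarrow> 'h"
  assumes lm: "lambda_module T"
begin

lemma alpha_invariant_subspace_eq_carrier:
  assumes chi: "character \<chi>" and k: "0 < k" and z: "cmod z = 1"
    and W: "invariant_subspace k (alpha T k z \<chi>) W" and i: "i < k" "unit_vec k i \<in> W"
  shows "W = carrier_vec k"
proof -
  have Wsub: "lin_subspace k W" and inv: "\<And>g v. v \<in> W \<Longrightarrow> alpha T k z \<chi> g *\<^sub>v v \<in> W"
    using W by (auto simp: invariant_subspace_iff)
  have shift: "unit_vec k (Suc j mod k) \<in> W" if "j < k" "unit_vec k j \<in> W" for j
  proof -
    have "alpha T k z \<chi> (1, 0) *\<^sub>v unit_vec k j = z \<cdot>\<^sub>v unit_vec k (Suc j mod k)"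
      using that k by (simp add: alpha_eq_monomial_mat monomial_mat_mult_unit_vec cshift_1
          funpow_zero[OF lm] character_zero[OF chi])
    then have "unit_vec k (Suc j mod k) = (1 / z) \<cdot>\<^sub>v (alpha T k z \<chi> (1, 0) *\<^sub>v unit_vec k j)"
      using z by (auto simp: smult_smult_assoc)
    then show ?thesis using Wsub inv[OF that(2)] unfolding lin_subspace_def by simp
  qed
  have orbit: "unit_vec k ((i + m) mod k) \<in> W" for m
  proof (induction m)
    case (Suc m)
    then show ?case using shift[of "(i + m) mod k"] k by (simp add: mod_Suc_eq)
  qed (use i in simp)
  have "unit_vec k j \<in> W" if "j < k" for j
  proof -
    have "(i + (j + k - i)) mod k = j" using i(1) that by simp
    then show ?thesis using orbit[of "j + k - i"] by simp
  qed
  then show ?thesis by (rule vec_space.lin_subspace_eq_carrier[OF Wsub])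
qed

lemma irreducible_alpha:
  assumes chi: "character \<chi>" and k: "0 < k" and z: "cmod z = 1"
    and prim: "\<forall>l. 1 \<le> l \<and> l < k \<longrightarrow> \<not> factors_through T l \<chi>"
  shows "irreducible_rep k (alpha T k z \<chi>)"
  unfolding irreducible_rep_def
proof (intro allI impI)
  fix W assume W: "invariant_subspace k (alpha T k z \<chi>) W"
  then have Wsub: "lin_subspace k W" and inv: "\<And>g v. v \<in> W \<Longrightarrow> alpha T k z \<chi> g *\<^sub>v v \<in> W"
    by (auto simp: invariant_subspace_iff)
  show "W = {0\<^sub>v k} \<or> W = carrier_vec k"
  proof (cases "W = {0\<^sub>v k}")
    case False
    have "vec k (\<lambda>i. \<chi> ((T ^^ i) h) * w $ i) \<in> W" if "w \<in> W" for h w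
      using inv[OF that, of "(0, h)"] that Wsub unfolding lin_subspace_def
      by (auto simp: alpha_eq_monomial_mat[OF k] monomial_mat_mult_vec_diag)
    then obtain i where "i < k" "unit_vec k i \<in> W"
      by (rule diag_invariant_subspace_unit_vec[OF Wsub False _
            funpow_character_separate[OF lm chi prim]])
    then show ?thesis using alpha_invariant_subspace_eq_carrier[OF chi k z W] by simp
  qed simp
qed

end

section \<open>Unitary representations of the semidirect product\<close>

lemma exists_root_cmod_1:
  assumes "cmod \<mu> = 1" and "0 < l"
  obtains z :: complex where "cmod z = 1" "z ^ l = \<mu>"
proof
  have "\<mu> \<noteq> 0" using assms by auto
  then show "cis (Arg \<mu> / real l) ^ l = \<mu>" using assms cis_Arg by (simp add: DeMoivre sgn_eq)
qed simp

lemma intertwine_mult: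
  assumes A: "A \<in> carrier_mat k k" and B: "B \<in> carrier_mat k k"
    and A': "A' \<in> carrier_mat l l" and B': "B' \<in> carrier_mat l l"
    and W: "W \<in> carrier_mat k l" and AW: "A * W = W * A'" and BW: "B * W = W * B'"
  shows "(A * B) * W = W * (A' * B')"
proof -
  have "(A * B) * W = A * (W * B')" using assoc_mult_mat[OF A B W] BW by simp
  also have "\<dots> = (W * A') * B'" using assoc_mult_mat[OF A W B', symmetric] AW by simp
  also have "\<dots> = W * (A' * B')" by (rule assoc_mult_mat[OF W A' B'])
  finally show ?thesis .
qed

lemma invariant_subspace_range:
  assumes W: "W \<in> carrier_mat k l" and \<rho>: "\<And>g. \<rho> g \<in> carrier_mat k k" and \<beta>: "\<And>g. \<beta> g \<in> carrier_mat l l"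
    and intertwine: "\<And>g. \<rho> g * W = W * \<beta> g"
  shows "invariant_subspace k \<rho> ((\<lambda>x. W *\<^sub>v x) ` carrier_vec l)"
  unfolding invariant_subspace_def
proof (intro conjI ballI allI)
  show "0\<^sub>v k \<in> (\<lambda>x. W *\<^sub>v x) ` carrier_vec l"
    using W by (intro image_eqI[of _ _ "0\<^sub>v l"]) (auto intro: eq_vecI)
  fix v assume "v \<in> (\<lambda>x. W *\<^sub>v x) ` carrier_vec l"
  then obtain x where x: "x \<in> carrier_vec l" "v = W *\<^sub>v x" by blast
  show "c \<cdot>\<^sub>v v \<in> (\<lambda>x. W *\<^sub>v x) ` carrier_vec l" for c
    using x W by (intro image_eqI[of _ _ "c \<cdot>\<^sub>v x"]) (auto simp: mult_mat_vec)
  show "\<rho> g *\<^sub>v v \<in> (\<lambda>x. W *\<^sub>v x) ` carrier_vec l" for g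
    using x W \<rho>[of g] \<beta>[of g] intertwine[of g]
    by (intro image_eqI[of _ _ "\<beta> g *\<^sub>v x"]) (auto simp flip: assoc_mult_mat_vec)
  fix w assume "w \<in> (\<lambda>x. W *\<^sub>v x) ` carrier_vec l"
  then obtain y where y: "y \<in> carrier_vec l" "w = W *\<^sub>v y" by blast
  show "v + w \<in> (\<lambda>x. W *\<^sub>v x) ` carrier_vec l"
    using x y W by (intro image_eqI[of _ _ "x + y"]) (auto simp: mult_add_distrib_mat_vec)
qed (use W in auto)

locale semidirect_rep =
  fixes T :: "'h::ab_group_add \<Rightarrow> 'h" and k :: nat and \<rho> :: "int \<times> 'h \<Rightarrow> complex mat"
  assumes lambda_module: "lambda_module T" and unitary_rep: "unitary_rep T k \<rho>"
begin

lemma rep_carrier: "\<rho> g \<in> carrier_mat k k"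
  and rep_ctrans_mult: "ctrans (\<rho> g) * \<rho> g = 1\<^sub>m k"
  and rep_mult: "\<rho> (sd_mult T g g') = \<rho> g * \<rho> g'"
  using unitary_rep unfolding unitary_rep_def unitary_mat_def by blast+

lemma rep_mult_pair: "\<rho> (n + m, tpow T m h + h') = \<rho> (n, h) * \<rho> (m, h')"
  using rep_mult[of "(n, h)" "(m, h')"] by (simp add: sd_mult_def)

lemma rep_zero: "\<rho> (0, 0) = 1\<^sub>m k"
proof -
  have idem: "\<rho> (0, 0) * \<rho> (0, 0) = \<rho> (0, 0)"
    using rep_mult_pair[of 0 0 0 0] by (simp add: tpow_0[OF lambda_module])
  have "1\<^sub>m k = ctrans (\<rho> (0, 0)) * (\<rho> (0, 0) * \<rho> (0, 0))"
    by (simp add: idem rep_ctrans_mult)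
  also have "\<dots> = \<rho> (0, 0)"
    using rep_carrier ctrans_carrier[OF rep_carrier]
    by (simp add: rep_ctrans_mult left_mult_one_mat[OF rep_carrier] flip: assoc_mult_mat[of _ k k _ k _ k])
  finally show ?thesis by simp
qed

lemma rep_split: "\<rho> (n, h) = \<rho> (n, 0) * \<rho> (0, h)"
  and rep_H_add: "\<rho> (0, h) * \<rho> (0, h') = \<rho> (0, h + h')"
  and rep_succ: "\<rho> (n + 1, 0) = \<rho> (n, 0) * \<rho> (1, 0)"
  and rep_pred: "\<rho> (n - 1, 0) = \<rho> (n, 0) * \<rho> (- 1, 0)"
  and rep_H_shift: "\<rho> (0, h) * \<rho> (1, 0) = \<rho> (1, T h)"
  and rep_shift_H: "\<rho> (1, 0) * \<rho> (0, h) = \<rho> (1, h)"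
  using rep_mult_pair[of n 0 0 h] rep_mult_pair[of 0 0 h h'] rep_mult_pair[of n 1 0 0]
    rep_mult_pair[of n "-1" 0 0] rep_mult_pair[of 0 1 h 0] rep_mult_pair[of 1 0 0 h]
  by (simp_all add: tpow_0[OF lambda_module] tpow_1[OF lambda_module] tpow_zero[OF lambda_module]
      funpow_zero[OF lambda_module, of 1])

lemma rep_H_commute: "\<rho> (0, h) * \<rho> (1, 0) = \<rho> (1, 0) * \<rho> (0, T h)"
  using rep_H_shift rep_shift_H by simp

lemma rep_shift_inverse: "\<rho> (- 1, 0) * \<rho> (1, 0) = 1\<^sub>m k" "\<rho> (1, 0) * \<rho> (- 1, 0) = 1\<^sub>m k"
  using rep_succ[of "- 1"] rep_pred[of 1] by (simp_all add: rep_zero)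

lemma intertwiner:
  assumes \<beta>: "semidirect_rep T l \<beta>" and W: "W \<in> carrier_mat k l"
    and gen1: "\<rho> (1, 0) * W = W * \<beta> (1, 0)" and genH: "\<And>h. \<rho> (0, h) * W = W * \<beta> (0, h)"
  shows "\<rho> g * W = W * \<beta> g"
proof -
  interpret \<beta>: semidirect_rep T l \<beta> by (rule \<beta>)
  have gen_inv: "\<rho> (- 1, 0) * W = W * \<beta> (- 1, 0)"
  proof -
    let ?R = "\<rho> (- 1, 0)" and ?B = "\<beta> (- 1, 0)"
    have "?R * W = ?R * (W * (\<beta> (1, 0) * ?B))"
      using W by (simp add: \<beta>.rep_shift_inverse)
    also have "\<dots> = ?R * ((\<rho> (1, 0) * W) * ?B)"
      using W by (simp add: gen1 assoc_mult_mat[OF W \<beta>.rep_carrier \<beta>.rep_carrier])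
    also have "\<dots> = (?R * \<rho> (1, 0)) * W * ?B"
      using W by (simp add: assoc_mult_mat[OF rep_carrier rep_carrier W]
          assoc_mult_mat[OF rep_carrier mult_carrier_mat[OF rep_carrier W] \<beta>.rep_carrier])
    also have "\<dots> = W * ?B" using W by (simp add: rep_shift_inverse)
    finally show ?thesis .
  qed
  have shifts: "\<rho> (n, 0) * W = W * \<beta> (n, 0)" for n
  proof (induction n rule: int_induct[where k = 0])
    case base
    show ?case using W by (simp add: rep_zero \<beta>.rep_zero)
  next
    case (step1 n)
    show ?case unfolding rep_succ \<beta>.rep_succ
      by (rule intertwine_mult[OF rep_carrier rep_carrier \<beta>.rep_carrier \<beta>.rep_carrier W step1.IH gen1])
  next
    case (step2 n)
    show ?case unfolding rep_pred \<beta>.rep_pred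
      by (rule intertwine_mult[OF rep_carrier rep_carrier \<beta>.rep_carrier \<beta>.rep_carrier W step2.IH gen_inv])
  qed
  obtain n h where g: "g = (n, h)" by (cases g)
  show ?thesis unfolding g rep_split[of n h] \<beta>.rep_split[of n h]
    by (rule intertwine_mult[OF rep_carrier rep_carrier \<beta>.rep_carrier \<beta>.rep_carrier W shifts genH])
qed

lemma dim_rep [simp]: "dim_row (\<rho> g) = k" "dim_col (\<rho> g) = k"
  using carrier_matD[OF rep_carrier] by blast+

lemma rep_mult_vec_carrier [simp]: "v \<in> carrier_vec k \<Longrightarrow> \<rho> g *\<^sub>v v \<in> carrier_vec k"
  by (rule mult_mat_vec_carrier[OF rep_carrier])

lemma shift_pow_carrier [simp]: "\<rho> (1, 0) ^\<^sub>m j \<in> carrier_mat k k"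
  by (rule pow_carrier_mat[OF rep_carrier])

lemma shift_pow_mult_vec_carrier [simp]: "v \<in> carrier_vec k \<Longrightarrow> (\<rho> (1, 0) ^\<^sub>m j) *\<^sub>v v \<in> carrier_vec k"
  by (rule mult_mat_vec_carrier[OF shift_pow_carrier])

lemma rep_mult_vec_mult_vec: "v \<in> carrier_vec k \<Longrightarrow> \<rho> g *\<^sub>v (\<rho> g' *\<^sub>v v) = (\<rho> g * \<rho> g') *\<^sub>v v"
  by (rule assoc_mult_mat_vec[symmetric, OF rep_carrier rep_carrier])

lemma shift_pow_Suc_mult_vec:
  "v \<in> carrier_vec k \<Longrightarrow> (\<rho> (1, 0) ^\<^sub>m j * \<rho> (1, 0)) *\<^sub>v v = (\<rho> (1, 0) ^\<^sub>m j) *\<^sub>v (\<rho> (1, 0) *\<^sub>v v)"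
  by (rule assoc_mult_mat_vec[OF shift_pow_carrier rep_carrier])

lemma shift_pow_cscalar_prod:
  assumes "v \<in> carrier_vec k" "w \<in> carrier_vec k"
  shows "((\<rho> (1, 0) ^\<^sub>m j) *\<^sub>v v) \<bullet>c ((\<rho> (1, 0) ^\<^sub>m j) *\<^sub>v w) = v \<bullet>c w"
  using assms
proof (induction j arbitrary: v w)
  case (Suc j)
  then show ?case
    using unitary_cscalar_prod[OF rep_carrier rep_ctrans_mult] by (simp add: shift_pow_Suc_mult_vec)
qed simp

lemma H_eigenvector_shift:
  assumes "v \<in> carrier_vec k" and "\<And>h. \<rho> (0, h) *\<^sub>v v = \<psi> h \<cdot>\<^sub>v v"
  shows "\<rho> (0, h) *\<^sub>v ((\<rho> (1, 0) ^\<^sub>m j) *\<^sub>v v) = \<psi> ((T ^^ j) h) \<cdot>\<^sub>v ((\<rho> (1, 0) ^\<^sub>m j) *\<^sub>v v)"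
  using assms
proof (induction j arbitrary: v \<psi> h)
  case (Suc j)
  let ?B = "\<rho> (1, 0)"
  have Bv: "?B *\<^sub>v v \<in> carrier_vec k" using Suc.prems(1) by simp
  have "\<rho> (0, h) *\<^sub>v (?B *\<^sub>v v) = \<psi> (T h) \<cdot>\<^sub>v (?B *\<^sub>v v)" for h
  proof -
    have "\<rho> (0, h) *\<^sub>v (?B *\<^sub>v v) = ?B *\<^sub>v (\<rho> (0, T h) *\<^sub>v v)"
      using Suc.prems(1) by (simp add: rep_mult_vec_mult_vec rep_H_commute)
    then show ?thesis using Suc.prems by (simp add: mult_mat_vec[OF rep_carrier])
  qed
  from Suc.IH[OF Bv this]
  show ?case using Suc.prems(1) by (simp add: shift_pow_Suc_mult_vec)
qed simp

lemma H_eigenvalue_character: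
  assumes v: "v \<in> carrier_vec k" "v \<bullet>c v = 1" and ev: "\<And>h. \<exists>c. \<rho> (0, h) *\<^sub>v v = c \<cdot>\<^sub>v v"
  defines "\<chi> \<equiv> \<lambda>h. (\<rho> (0, h) *\<^sub>v v) \<bullet>c v"
  shows "character \<chi>" and "\<rho> (0, h) *\<^sub>v v = \<chi> h \<cdot>\<^sub>v v"
proof -
  have v0: "v \<noteq> 0\<^sub>v k" using v by auto
  show ev_chi: "\<rho> (0, h) *\<^sub>v v = \<chi> h \<cdot>\<^sub>v v" for h
  proof -
    obtain c where c: "\<rho> (0, h) *\<^sub>v v = c \<cdot>\<^sub>v v" using ev by blast
    then have "\<chi> h = c" unfolding \<chi>_def using v by (simp add: cscalar_prod_smult_left)
    then show ?thesis using c by simp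
  qed
  show "character \<chi>" unfolding character_def
  proof (intro conjI allI)
    show "cmod (\<chi> a) = 1" for a
      by (rule unitary_eigenvalue_cmod[OF rep_carrier rep_ctrans_mult v(1) v0 ev_chi])
    show "\<chi> (a + b) = \<chi> a * \<chi> b" for a b
    proof -
      have "\<rho> (0, a + b) *\<^sub>v v = (\<chi> a * \<chi> b) \<cdot>\<^sub>v v"
        using v(1) rep_mult_vec_mult_vec[of v "(0, a)" "(0, b)"]
        by (simp add: ev_chi mult_mat_vec[OF rep_carrier] smult_smult_assoc mult.commute rep_H_add)
      then show ?thesis unfolding \<chi>_def using v by (simp add: cscalar_prod_smult_left)
    qed
  qed
qed

lemma H_common_eigenvector:
  assumes k: "0 < k"
  obtains v \<chi> where "v \<in> carrier_vec k" "v \<bullet>c v = 1" "character \<chi>" "\<And>h. \<rho> (0, h) *\<^sub>v v = \<chi> h \<cdot>\<^sub>v v"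
proof -
  have "unit_vec k 0 $ 0 \<noteq> (0\<^sub>v k :: complex vec) $ 0" using k by simp
  then have "unit_vec k 0 \<noteq> (0\<^sub>v k :: complex vec)" by metis
  then have ne: "carrier_vec k \<noteq> {0\<^sub>v k :: complex vec}" using unit_vec_carrier[of k 0] by blast
  have comm: "\<rho> (0, a) *\<^sub>v (\<rho> (0, b) *\<^sub>v w) = \<rho> (0, b) *\<^sub>v (\<rho> (0, a) *\<^sub>v w)"
    if "w \<in> carrier_vec k" for a b w
    using that by (simp add: rep_mult_vec_mult_vec rep_H_add add.commute)
  have "range (\<lambda>h. \<rho> (0, h)) \<subseteq> carrier_mat k k" using rep_carrier by auto
  moreover have "\<forall>F\<in>range (\<lambda>h. \<rho> (0, h)). \<forall>w\<in>carrier_vec k. F *\<^sub>v w \<in> carrier_vec k" by auto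
  moreover have "\<forall>F\<in>range (\<lambda>h. \<rho> (0, h)). \<forall>G\<in>range (\<lambda>h. \<rho> (0, h)). \<forall>w\<in>carrier_vec k.
      F *\<^sub>v (G *\<^sub>v w) = G *\<^sub>v (F *\<^sub>v w)" using comm by auto
  ultimately obtain v0 where v0: "v0 \<in> carrier_vec k" "v0 \<noteq> 0\<^sub>v k"
    and ev0: "\<forall>F\<in>range (\<lambda>h. \<rho> (0, h)). \<exists>c. F *\<^sub>v v0 = c \<cdot>\<^sub>v v0"
    by (rule common_eigenvector[OF lin_subspace_carrier ne])
  obtain c where c: "(c \<cdot>\<^sub>v v0) \<bullet>c (c \<cdot>\<^sub>v v0) = 1" by (rule exists_unit_multiple[OF v0])
  have v: "c \<cdot>\<^sub>v v0 \<in> carrier_vec k" "(c \<cdot>\<^sub>v v0) \<bullet>c (c \<cdot>\<^sub>v v0) = 1" using v0 c by simp_all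
  have "\<exists>a. \<rho> (0, h) *\<^sub>v (c \<cdot>\<^sub>v v0) = a \<cdot>\<^sub>v (c \<cdot>\<^sub>v v0)" for h
  proof -
    obtain a where "\<rho> (0, h) *\<^sub>v v0 = a \<cdot>\<^sub>v v0" using ev0 by blast
    then have "\<rho> (0, h) *\<^sub>v (c \<cdot>\<^sub>v v0) = a \<cdot>\<^sub>v (c \<cdot>\<^sub>v v0)"
      using mult_mat_vec[OF rep_carrier v0(1)] by (simp add: smult_smult_assoc mult.commute)
    then show ?thesis by blast
  qed
  from H_eigenvalue_character[OF v this] show ?thesis by (rule that[OF v])
qed

lemma shift_orbit_orthonormal:
  assumes v: "v \<in> carrier_vec k" "v \<bullet>c v = 1" and chi: "character \<chi>"
    and ev: "\<And>h. \<rho> (0, h) *\<^sub>v v = \<chi> h \<cdot>\<^sub>v v"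
    and prim: "\<forall>d. 1 \<le> d \<and> d < m \<longrightarrow> \<not> factors_through T d \<chi>" and ij: "i < m" "j < m"
  shows "((\<rho> (1, 0) ^\<^sub>m j) *\<^sub>v v) \<bullet>c ((\<rho> (1, 0) ^\<^sub>m i) *\<^sub>v v) = (if i = j then 1 else 0)"
proof (cases "i = j")
  case True
  then show ?thesis using shift_pow_cscalar_prod[OF v(1) v(1)] v(2) by simp
next
  case False
  obtain h where h: "\<chi> ((T ^^ j) h) \<noteq> \<chi> ((T ^^ i) h)"
    using funpow_character_separate[OF lambda_module chi prim ij(2) ij(1)] False by auto
  have "(\<rho> (1, 0) ^\<^sub>m i) *\<^sub>v v \<noteq> 0\<^sub>v k"
    using shift_pow_cscalar_prod[OF v(1) v(1), of i] v(2) by auto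
  then show ?thesis
    using unitary_eigenvectors_orthogonal[OF rep_carrier rep_ctrans_mult shift_pow_mult_vec_carrier[OF v(1)]
        shift_pow_mult_vec_carrier[OF v(1)] _ H_eigenvector_shift[OF v(1) ev] H_eigenvector_shift[OF v(1) ev] h]
      False by simp
qed

lemma eigencharacter_period:
  assumes v: "v \<in> carrier_vec k" "v \<bullet>c v = 1" and chi: "character \<chi>"
    and ev: "\<And>h. \<rho> (0, h) *\<^sub>v v = \<chi> h \<cdot>\<^sub>v v"
  shows "\<exists>l. 1 \<le> l \<and> factors_through T l \<chi>"
proof (rule ccontr)
  \<comment> \<open>Otherwise the k + 1 vectors \<open>\<rho> (1, 0) ^ j v\<close> for j \<le> k would be orthonormal in a k-dimensional space.\<close>
  assume "\<not> ?thesis"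
  then have prim: "\<forall>d. 1 \<le> d \<and> d < Suc k \<longrightarrow> \<not> factors_through T d \<chi>" by blast
  have "ctrans (mat_of_col_fun k (Suc k) (\<lambda>j. (\<rho> (1, 0) ^\<^sub>m j) *\<^sub>v v)) *
      mat_of_col_fun k (Suc k) (\<lambda>j. (\<rho> (1, 0) ^\<^sub>m j) *\<^sub>v v) = 1\<^sub>m (Suc k)"
    using v(1) shift_orbit_orthonormal[OF v chi ev prim]
    by (intro ctrans_mult_mat_of_col_fun_orthonormal) simp_all
  then have "Suc k \<le> k" by (rule orthonormal_cols_le[OF mat_of_col_fun_carrier])
  then show False by simp
qed

lemma shift_commute_pow:
  assumes "v \<in> carrier_vec k"
  shows "\<rho> (1, 0) *\<^sub>v ((\<rho> (1, 0) ^\<^sub>m j) *\<^sub>v v) = (\<rho> (1, 0) ^\<^sub>m j) *\<^sub>v (\<rho> (1, 0) *\<^sub>v v)"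
  using assms by (induction j arbitrary: v) (simp_all add: shift_pow_Suc_mult_vec)

lemma periodic_eigenvector:
  assumes v0: "v0 \<in> carrier_vec k" "v0 \<noteq> 0\<^sub>v k" and ev0: "\<And>h. \<rho> (0, h) *\<^sub>v v0 = \<chi> h \<cdot>\<^sub>v v0"
    and chi: "character \<chi>" and per: "factors_through T l \<chi>" and l: "0 < l"
  obtains v z where "v \<in> carrier_vec k" "v \<bullet>c v = 1" "\<And>h. \<rho> (0, h) *\<^sub>v v = \<chi> h \<cdot>\<^sub>v v"
    "cmod z = 1" "(\<rho> (1, 0) ^\<^sub>m l) *\<^sub>v v = z ^ l \<cdot>\<^sub>v v"
proof -
  define E where "E = {w \<in> carrier_vec k. \<forall>h. \<rho> (0, h) *\<^sub>v w = \<chi> h \<cdot>\<^sub>v w}"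
  have E: "lin_subspace k E"
    unfolding E_def by (rule lin_subspace_common_eigenspace[OF lin_subspace_carrier rep_carrier])
  have "E \<noteq> {0\<^sub>v k}" using v0 ev0 unfolding E_def by blast
  moreover have "\<forall>w\<in>E. (\<rho> (1, 0) ^\<^sub>m l) *\<^sub>v w \<in> E"
    using H_eigenvector_shift per unfolding E_def factors_through_iff[OF chi] by auto
  ultimately obtain v1 \<mu> where v1: "v1 \<in> E" "v1 \<noteq> 0\<^sub>v k" "(\<rho> (1, 0) ^\<^sub>m l) *\<^sub>v v1 = \<mu> \<cdot>\<^sub>v v1"
    by (rule eigenvector_in_invariant_subspace[OF E _ shift_pow_carrier])
  have v1C: "v1 \<in> carrier_vec k" using v1(1) unfolding E_def by blast
  obtain c where c: "(c \<cdot>\<^sub>v v1) \<bullet>c (c \<cdot>\<^sub>v v1) = 1" by (rule exists_unit_multiple[OF v1C v1(2)])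
  have "(\<mu> \<cdot>\<^sub>v v1) \<bullet>c (\<mu> \<cdot>\<^sub>v v1) = v1 \<bullet>c v1"
    unfolding v1(3)[symmetric] by (rule shift_pow_cscalar_prod[OF v1C v1C])
  then have "cmod \<mu> = 1" by (rule cmod_eq_1_if_smult_isometric[OF v1C v1(2)])
  then obtain z where z: "cmod z = 1" "z ^ l = \<mu>" using l by (rule exists_root_cmod_1)
  have "c \<cdot>\<^sub>v v1 \<in> E" using E v1(1) unfolding lin_subspace_def by blast
  moreover have "(\<rho> (1, 0) ^\<^sub>m l) *\<^sub>v (c \<cdot>\<^sub>v v1) = z ^ l \<cdot>\<^sub>v (c \<cdot>\<^sub>v v1)"
    using v1C v1(3) z(2) by (simp add: mult_mat_vec[OF shift_pow_carrier] smult_smult_assoc mult.commute)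
  ultimately show ?thesis using that c z(1) unfolding E_def by blast
qed

(* When z ^ l is the eigenvalue of rho(1,0)^l at v, rho(1,0) permutes the rescaled orbit vectors
   below cyclically up to the factor z, which is how alpha_(z,chi)(1,0) acts on unit vectors. *)
definition orbit_vec :: "complex \<Rightarrow> complex vec \<Rightarrow> nat \<Rightarrow> complex vec" where
  "orbit_vec z v j = inverse z ^ j \<cdot>\<^sub>v ((\<rho> (1, 0) ^\<^sub>m j) *\<^sub>v v)"

definition orbit_frame :: "complex \<Rightarrow> nat \<Rightarrow> complex vec \<Rightarrow> complex mat" where
  "orbit_frame z l v = mat_of_col_fun k l (orbit_vec z v)"

lemma orbit_vec_carrier [simp]: "v \<in> carrier_vec k \<Longrightarrow> orbit_vec z v j \<in> carrier_vec k"
  unfolding orbit_vec_def by simp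

lemma orbit_frame_isometry:
  assumes v: "v \<in> carrier_vec k" "v \<bullet>c v = 1" and chi: "character \<chi>"
    and ev: "\<And>h. \<rho> (0, h) *\<^sub>v v = \<chi> h \<cdot>\<^sub>v v" and z: "cmod z = 1"
    and prim: "\<forall>d. 1 \<le> d \<and> d < l \<longrightarrow> \<not> factors_through T d \<chi>"
  shows "ctrans (orbit_frame z l v) * orbit_frame z l v = 1\<^sub>m l"
  unfolding orbit_frame_def
proof (rule ctrans_mult_mat_of_col_fun_orthonormal)
  fix i j assume ij: "i < l" "j < l"
  let ?u = "\<lambda>j. (\<rho> (1, 0) ^\<^sub>m j) *\<^sub>v v"
  have uC: "?u j \<in> carrier_vec k" for j using v(1) by simp
  have "orbit_vec z v j \<bullet>c orbit_vec z v i = inverse z ^ j * cnj (inverse z ^ i) * (?u j \<bullet>c ?u i)"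
    unfolding orbit_vec_def
    by (simp add: cscalar_prod_smult_left[OF uC smult_carrier_vec[THEN iffD2, OF uC]]
        cscalar_prod_smult_right[OF uC uC])
  moreover have "inverse z ^ j * cnj (inverse z ^ j) = 1"
    using complex_norm_square[of "inverse z ^ j"] z by (simp add: norm_power norm_inverse)
  moreover have "?u j \<bullet>c ?u i = (if i = j then 1 else 0)"
    by (rule shift_orbit_orthonormal[OF v chi ev prim ij])
  ultimately show "orbit_vec z v j \<bullet>c orbit_vec z v i = (if i = j then 1 else 0)" by simp
qed (use v(1) in simp)

lemma orbit_vec_shift:
  assumes v: "v \<in> carrier_vec k" and z: "z \<noteq> 0" and pow: "(\<rho> (1, 0) ^\<^sub>m l) *\<^sub>v v = z ^ l \<cdot>\<^sub>v v"
    and j: "j < l"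
  shows "\<rho> (1, 0) *\<^sub>v orbit_vec z v j = z \<cdot>\<^sub>v orbit_vec z v (Suc j mod l)"
proof -
  have step: "\<rho> (1, 0) *\<^sub>v orbit_vec z v j = inverse z ^ j \<cdot>\<^sub>v ((\<rho> (1, 0) ^\<^sub>m Suc j) *\<^sub>v v)"
    unfolding orbit_vec_def using v
    by (simp add: mult_mat_vec[OF rep_carrier] shift_commute_pow shift_pow_Suc_mult_vec)
  show ?thesis
  proof (cases "Suc j < l")
    case True
    have "z \<cdot>\<^sub>v orbit_vec z v (Suc j) = inverse z ^ j \<cdot>\<^sub>v ((\<rho> (1, 0) ^\<^sub>m Suc j) *\<^sub>v v)"
      unfolding orbit_vec_def using z by (simp add: smult_smult_assoc mult.assoc[symmetric])
    then show ?thesis using step True by simp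
  next
    case False
    then have "Suc j = l" using j by simp
    moreover have "inverse z ^ j * z ^ Suc j = z" using z by (simp add: field_simps)
    ultimately show ?thesis using step pow v by (simp add: orbit_vec_def smult_smult_assoc)
  qed
qed

lemma orbit_frame_intertwines:
  assumes v: "v \<in> carrier_vec k" and chi: "character \<chi>" and ev: "\<And>h. \<rho> (0, h) *\<^sub>v v = \<chi> h \<cdot>\<^sub>v v"
    and l: "0 < l" and per: "factors_through T l \<chi>" and z: "cmod z = 1"
    and pow: "(\<rho> (1, 0) ^\<^sub>m l) *\<^sub>v v = z ^ l \<cdot>\<^sub>v v"
  shows "\<rho> g * orbit_frame z l v = orbit_frame z l v * alpha T l z \<chi> g"
proof -
  let ?W = "orbit_frame z l v"
  have W: "?W \<in> carrier_mat k l" unfolding orbit_frame_def by simp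
  have z0: "z \<noteq> 0" using z by auto
  have col_W: "col (\<rho> g * ?W) j = \<rho> g *\<^sub>v orbit_vec z v j" if "j < l" for g j
    using col_mult2[OF rep_carrier W that] col_mat_of_col_fun[OF that orbit_vec_carrier[OF v]]
    unfolding orbit_frame_def by simp
  interpret \<alpha>: semidirect_rep T l "alpha T l z \<chi>"
    using unitary_rep_alpha[OF lambda_module chi per l z] lambda_module by unfold_locales
  have "\<rho> (1, 0) * ?W = ?W * alpha T l z \<chi> (1, 0)"
  proof (rule mat_col_eqI)
    fix j assume "j < dim_col (?W * alpha T l z \<chi> (1, 0))"
    then have j: "j < l" using W by simp
    have "col (?W * alpha T l z \<chi> (1, 0)) j = z \<cdot>\<^sub>v orbit_vec z v (Suc j mod l)"
      using j l v unfolding orbit_frame_def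
      by (simp add: alpha_eq_monomial_mat[OF l] col_mat_of_col_fun_mult_monomial_mat cshift_1
          funpow_zero[OF lambda_module] character_zero[OF chi])
    then show "col (\<rho> (1, 0) * ?W) j = col (?W * alpha T l z \<chi> (1, 0)) j"
      using col_W[OF j] orbit_vec_shift[OF v z0 pow j] by simp
  qed (use W in simp_all)
  moreover have "\<rho> (0, h) * ?W = ?W * alpha T l z \<chi> (0, h)" for h
  proof (rule mat_col_eqI)
    fix j assume "j < dim_col (?W * alpha T l z \<chi> (0, h))"
    then have j: "j < l" using W by simp
    have "col (?W * alpha T l z \<chi> (0, h)) j = \<chi> ((T ^^ j) h) \<cdot>\<^sub>v orbit_vec z v j"
      using j l v unfolding orbit_frame_def
      by (simp add: alpha_eq_monomial_mat[OF l] col_mat_of_col_fun_mult_monomial_mat cshift_0)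
    then show "col (\<rho> (0, h) * ?W) j = col (?W * alpha T l z \<chi> (0, h)) j"
      using col_W[OF j] H_eigenvector_shift[OF v ev] v
      by (simp add: orbit_vec_def mult_mat_vec[OF rep_carrier] smult_smult_assoc mult.commute)
  qed (use W in simp_all)
  ultimately show ?thesis by (rule intertwiner[OF \<alpha>.semidirect_rep_axioms W])
qed

lemma isometric_intertwiner_onto:
  assumes irr: "irreducible_rep k \<rho>" and l: "0 < l"
    and W: "W \<in> carrier_mat k l" and WW: "ctrans W * W = 1\<^sub>m l"
    and \<beta>: "\<And>g. \<beta> g \<in> carrier_mat l l" and intertwine: "\<And>g. \<rho> g * W = W * \<beta> g"
  shows "W * ctrans W = 1\<^sub>m k"
proof -
  have "invariant_subspace k \<rho> ((\<lambda>x. W *\<^sub>v x) ` carrier_vec l)"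
    by (rule invariant_subspace_range[OF W rep_carrier \<beta> intertwine])
  moreover have "(\<lambda>x. W *\<^sub>v x) ` carrier_vec l \<noteq> {0\<^sub>v k}"
  proof
    assume "(\<lambda>x. W *\<^sub>v x) ` carrier_vec l = {0\<^sub>v k}"
    moreover have "W *\<^sub>v unit_vec l 0 \<in> (\<lambda>x. W *\<^sub>v x) ` carrier_vec l" by simp
    moreover have "W *\<^sub>v 0\<^sub>v l = 0\<^sub>v k" using W by (intro eq_vecI) auto
    ultimately have "W *\<^sub>v unit_vec l 0 = W *\<^sub>v 0\<^sub>v l" by simp
    then have "unit_vec l 0 = (0\<^sub>v l :: complex vec)" by (rule orthonormal_cols_inj[OF W WW, rotated 2]) simp_all
    then have "unit_vec l 0 $ 0 = (0\<^sub>v l :: complex vec) $ 0" by simp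
    then show False using l by simp
  qed
  ultimately have range: "(\<lambda>x. W *\<^sub>v x) ` carrier_vec l = carrier_vec k"
    using irr unfolding irreducible_rep_def by blast
  show ?thesis
  proof (rule mat_eq_one_if_fixes_vectors)
    show "W * ctrans W \<in> carrier_mat k k" using W ctrans_carrier[OF W] by simp
    fix y :: "complex vec" assume "y \<in> carrier_vec k"
    then obtain x where x: "x \<in> carrier_vec l" "y = W *\<^sub>v x" using range by blast
    have "ctrans W *\<^sub>v (W *\<^sub>v x) = x"
      using assoc_mult_mat_vec[OF ctrans_carrier[OF W] W x(1)] WW x(1) by simp
    then show "(W * ctrans W) *\<^sub>v y = y"
      using assoc_mult_mat_vec[OF W ctrans_carrier[OF W]] x W by simp
  qed
qed

lemma irreducible_conj_alpha:
  assumes k: "0 < k" and irr: "irreducible_rep k \<rho>"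
  shows "\<exists>U z \<chi>. unitary_mat k U \<and> cmod z = 1 \<and> character \<chi> \<and> factors_through T k \<chi> \<and>
    (\<forall>g. \<rho> g = U * alpha T k z \<chi> g * ctrans U)"
proof -
  obtain v0 \<chi> where v0: "v0 \<in> carrier_vec k" "v0 \<bullet>c v0 = 1" and chi: "character \<chi>"
    and ev0: "\<And>h. \<rho> (0, h) *\<^sub>v v0 = \<chi> h \<cdot>\<^sub>v v0"
    using H_common_eigenvector[OF k] by blast
  define l where "l = (LEAST l. 1 \<le> l \<and> factors_through T l \<chi>)"
  have l: "0 < l" "factors_through T l \<chi>"
    using LeastI_ex[OF eigencharacter_period[OF v0 chi ev0]] unfolding l_def by auto
  have prim: "\<forall>d. 1 \<le> d \<and> d < l \<longrightarrow> \<not> factors_through T d \<chi>"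
    unfolding l_def using not_less_Least by blast
  have "v0 \<noteq> 0\<^sub>v k" using v0 by auto
  then obtain v z where v: "v \<in> carrier_vec k" "v \<bullet>c v = 1" and ev: "\<And>h. \<rho> (0, h) *\<^sub>v v = \<chi> h \<cdot>\<^sub>v v"
    and z: "cmod z = 1" and pow: "(\<rho> (1, 0) ^\<^sub>m l) *\<^sub>v v = z ^ l \<cdot>\<^sub>v v"
    using periodic_eigenvector[OF v0(1) _ ev0 chi l(2) l(1)] by blast
  define W where "W = orbit_frame z l v"
  have W: "W \<in> carrier_mat k l" unfolding W_def orbit_frame_def by simp
  have WW: "ctrans W * W = 1\<^sub>m l" unfolding W_def by (rule orbit_frame_isometry[OF v chi ev z prim])
  have intertwine: "\<rho> g * W = W * alpha T l z \<chi> g" for g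
    unfolding W_def by (rule orbit_frame_intertwines[OF v(1) chi ev l z pow])
  have WW': "W * ctrans W = 1\<^sub>m k"
    by (rule isometric_intertwiner_onto[OF irr l(1) W WW alpha_carrier[OF l(1)] intertwine])
  have "l \<le> k" by (rule orthonormal_cols_le[OF W WW])
  moreover have "k \<le> l"
    using WW' ctrans_ctrans[of W] by (intro orthonormal_cols_le[OF ctrans_carrier[OF W]]) simp
  ultimately have "l = k" by simp
  have "\<rho> g = W * alpha T k z \<chi> g * ctrans W" for g
  proof -
    have "\<rho> g = (\<rho> g * W) * ctrans W"
      using WW' W ctrans_carrier[OF W] by (simp add: assoc_mult_mat[OF rep_carrier W])
    then show ?thesis using intertwine \<open>l = k\<close> by simp
  qed
  moreover have "unitary_mat k W" using W WW WW' \<open>l = k\<close> unfolding unitary_mat_def by simp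
  ultimately show ?thesis using z chi l(2) \<open>l = k\<close> by blast
qed

end

theorem proposition4p1:
  fixes T :: "'h::ab_group_add \<Rightarrow> 'h" and k :: nat
  assumes "lambda_module T" and "k \<ge> 1"
  shows "(\<forall>z \<chi>. cmod z = 1 \<and> character \<chi> \<and> factors_through T k \<chi> \<longrightarrow>
            unitary_rep T k (alpha T k z \<chi>))
       \<and> (\<forall>z \<chi>. cmod z = 1 \<and> character \<chi> \<and> factors_through T k \<chi> \<and>
            (\<forall>l. 1 \<le> l \<and> l < k \<longrightarrow> \<not> factors_through T l \<chi>) \<longrightarrow>
            irreducible_rep k (alpha T k z \<chi>))
       \<and> (\<forall>\<rho>. unitary_rep T k \<rho> \<and> irreducible_rep k \<rho> \<longrightarrow>
            (\<exists>U z \<chi>. unitary_mat k U \<and> cmod z = 1 \<and> character \<chi> \<and> factors_through T k \<chi> \<and>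
               (\<forall>g. \<rho> g = U * alpha T k z \<chi> g * ctrans U)))"
proof (intro conjI allI impI)
  have k: "0 < k" using assms(2) by simp
  show "unitary_rep T k (alpha T k z \<chi>)"
    if "cmod z = 1 \<and> character \<chi> \<and> factors_through T k \<chi>" for z \<chi>
    using that unitary_rep_alpha[OF assms(1) _ _ k] by blast
  show "irreducible_rep k (alpha T k z \<chi>)"
    if "cmod z = 1 \<and> character \<chi> \<and> factors_through T k \<chi> \<and>
        (\<forall>l. 1 \<le> l \<and> l < k \<longrightarrow> \<not> factors_through T l \<chi>)" for z \<chi>
    using that irreducible_alpha[OF assms(1) _ k] by blast
  show "\<exists>U z \<chi>. unitary_mat k U \<and> cmod z = 1 \<and> character \<chi> \<and> factors_through T k \<chi> \<and>
      (\<forall>g. \<rho> g = U * alpha T k z \<chi> g * ctrans U)"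
    if "unitary_rep T k \<rho> \<and> irreducible_rep k \<rho>" for \<rho>
    using that semidirect_rep.irreducible_conj_alpha[OF _ k] assms(1) unfolding semidirect_rep_def by blast
qed

end
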